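(* For all integers $k,d\ge1$ there is a GJ algorithm which, given the entries of a matrix $Z\in\mathbb R^{k\times d}$ as input, outputs the entries of $Z^\dagger Z$ (the orthogonal projection onto the row space of $Z$). This algorithm has degree $O(k)$ and predicate complexity at most $2^k$. Furthermore, if $Z$ is promised to have rank $k$, there is such a GJ algorithm of degree $O(k)$ and predicate complexity $0$.
   Context: $M^\dagger$ denotes the Moore–Penrose pseudo-inverse. A GJ algorithm operates on real-valued inputs and performs only arithmetic operations $v''=v\odot v'$ with $\odot\in\{+,-,\times,\div\}$ and conditional statements "if $v\ge0$ then ... else ...", where $v,v'$ are inputs or previously computed values. Every value it computes is a rational function of the inputs; the degree of a rational function is the maximum of the degrees of numerator and denominator in reduced form. The degree of a GJ algorithm is the maximum degree of any rational function of the inputs it computes; its predicate complexity is the number of distinct rational functions appearing in its conditional statements. *)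

theory Defs
  imports "HOL-Library.Poly_Mapping" "HOL-Computational_Algebra.Fraction_Field"
          "Jordan_Normal_Form.DL_Rank"
begin

text \<open>The current values
 form a list whose first n entries are the inputs; an arithmetic step appends
 v_i op v_j; a conditional tests v_i \<ge> 0; the output step returns a list of values.\<close>

datatype gj_op = GAdd | GSub | GMul | GDiv

datatype gj =
    GOutput "nat list"
  | GCompute gj_op nat nat gj
  | GBranch nat gj gj

fun gj_apply_real :: "gj_op \<Rightarrow> real \<Rightarrow> real \<Rightarrow> real option" where
  "gj_apply_real GAdd a b = Some (a + b)"
| "gj_apply_real GSub a b = Some (a - b)"
| "gj_apply_real GMul a b = Some (a * b)"
| "gj_apply_real GDiv a b = (if b = 0 then None else Some (a / b))"

fun gj_exec :: "gj \<Rightarrow> real list \<Rightarrow> real list option" where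
  "gj_exec (GOutput is) vs =
     (if (\<forall>i\<in>set is. i < length vs) then Some (map (\<lambda>i. vs ! i) is) else None)"
| "gj_exec (GCompute f i j P) vs =
     (if i < length vs \<and> j < length vs then
        (case gj_apply_real f (vs ! i) (vs ! j) of
           None \<Rightarrow> None
         | Some v \<Rightarrow> gj_exec P (vs @ [v]))
      else None)"
| "gj_exec (GBranch i P Q) vs =
     (if i < length vs then (if vs ! i \<ge> 0 then gj_exec P vs else gj_exec Q vs) else None)"

fun gj_wf :: "gj \<Rightarrow> nat \<Rightarrow> bool" where
  "gj_wf (GOutput is) m = (\<forall>i\<in>set is. i < m)"
| "gj_wf (GCompute f i j P) m = (i < m \<and> j < m \<and> gj_wf P (Suc m))"
| "gj_wf (GBranch i P Q) m = (i < m \<and> gj_wf P m \<and> gj_wf Q m)"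

text \<open>Multivariate real polynomials in variables X_0, X_1, ...; monomials are
 finitely supported exponent vectors.\<close>

type_synonym mpoly = "(nat \<Rightarrow>\<^sub>0 nat) \<Rightarrow>\<^sub>0 real"
type_synonym ratfun = "mpoly fract"

definition mon_deg :: "(nat \<Rightarrow>\<^sub>0 nat) \<Rightarrow> nat" where
  "mon_deg m = (\<Sum>i\<in>Poly_Mapping.keys m. Poly_Mapping.lookup m i)"

definition mpoly_deg :: "mpoly \<Rightarrow> nat" where
  "mpoly_deg p = Max (insert 0 (mon_deg ` Poly_Mapping.keys p))"

definition mpoly_var :: "nat \<Rightarrow> mpoly" where
  "mpoly_var i = Poly_Mapping.single (Poly_Mapping.single i 1) 1"

text \<open>Degree of a rational function: max of the degrees of numerator and denominator
 in reduced form. Since a reduced representation simultaneously minimises the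
 degrees of numerator and denominator, this is the least such max over all
 representations.\<close>

definition ratfun_deg :: "ratfun \<Rightarrow> nat" where
  "ratfun_deg r = (LEAST D. \<exists>p q. q \<noteq> 0 \<and> r = Fract p q \<and> D = max (mpoly_deg p) (mpoly_deg q))"

fun gj_apply_sym :: "gj_op \<Rightarrow> ratfun \<Rightarrow> ratfun \<Rightarrow> ratfun" where
  "gj_apply_sym GAdd a b = a + b"
| "gj_apply_sym GSub a b = a - b"
| "gj_apply_sym GMul a b = a * b"
| "gj_apply_sym GDiv a b = a / b"

fun gj_sym_vals :: "gj \<Rightarrow> ratfun list \<Rightarrow> ratfun set" where
  "gj_sym_vals (GOutput is) vs = {}"
| "gj_sym_vals (GCompute f i j P) vs =
     (let v = gj_apply_sym f (vs ! i) (vs ! j) in insert v (gj_sym_vals P (vs @ [v])))"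
| "gj_sym_vals (GBranch i P Q) vs = gj_sym_vals P vs \<union> gj_sym_vals Q vs"

fun gj_sym_preds :: "gj \<Rightarrow> ratfun list \<Rightarrow> ratfun set" where
  "gj_sym_preds (GOutput is) vs = {}"
| "gj_sym_preds (GCompute f i j P) vs =
     (let v = gj_apply_sym f (vs ! i) (vs ! j) in gj_sym_preds P (vs @ [v]))"
| "gj_sym_preds (GBranch i P Q) vs = insert (vs ! i) (gj_sym_preds P vs \<union> gj_sym_preds Q vs)"

definition gj_inputs :: "nat \<Rightarrow> ratfun list" where
  "gj_inputs n = map (\<lambda>i. Fract (mpoly_var i) 1) [0..<n]"

text \<open>Degree of a GJ algorithm with n inputs (inputs themselves have degree 1).\<close>

definition gj_degree :: "nat \<Rightarrow> gj \<Rightarrow> nat" where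
  "gj_degree n P = Max (insert (if n = 0 then 0 else 1) (ratfun_deg ` gj_sym_vals P (gj_inputs n)))"

definition gj_pred_complexity :: "nat \<Rightarrow> gj \<Rightarrow> nat" where
  "gj_pred_complexity n P = card (gj_sym_preds P (gj_inputs n))"

text \<open>Moore--Penrose pseudo-inverse of a real k x d matrix (real case: conjugate transpose = transpose).\<close>

definition pinv :: "real mat \<Rightarrow> real mat" where
  "pinv Z = (THE X. X \<in> carrier_mat (dim_col Z) (dim_row Z) \<and>
      Z * X * Z = Z \<and> X * Z * X = X \<and>
      transpose_mat (Z * X) = Z * X \<and> transpose_mat (X * Z) = X * Z)"

text \<open>Input convention: the k*d inputs are the entries of Z in row-major order.\<close>

definition mat_of_input :: "nat \<Rightarrow> nat \<Rightarrow> real list \<Rightarrow> real mat" where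
  "mat_of_input k d xs = mat k d (\<lambda>(i, j). xs ! (i * d + j))"

text \<open>Output convention: the d*d entries of a d x d matrix in row-major order.\<close>

definition mat_entries :: "real mat \<Rightarrow> real list" where
  "mat_entries M = concat (map (\<lambda>p. map (\<lambda>q. M $$ (p, q)) [0..<dim_col M]) [0..<dim_row M])"

definition gj_computes_proj :: "nat \<Rightarrow> nat \<Rightarrow> (real mat \<Rightarrow> bool) \<Rightarrow> gj \<Rightarrow> bool" where
  "gj_computes_proj k d Prom P \<longleftrightarrow> gj_wf P (k * d) \<and>
     (\<forall>xs. length xs = k * d \<longrightarrow> Prom (mat_of_input k d xs) \<longrightarrow>
        gj_exec P xs = Some (mat_entries (pinv (mat_of_input k d xs) * mat_of_input k d xs)))"

end

theory Submission
  imports Defs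
begin

text \<open>If the rows of \<open>Z\<close> listed in \<open>S\<close> form a basis of its row space and \<open>A\<close> is the
  submatrix of these rows, then \<open>Z\<^sup>+ Z = A\<^sup>T (A A\<^sup>T)\<^sup>-\<^sup>1 A\<close>; its entries are polynomials of
  degree \<open>2 |S|\<close> divided by the Gram determinant \<open>det (A A\<^sup>T)\<close>, via the adjugate. A basis is
  found greedily: row \<open>i\<close> is added to \<open>S\<close> iff \<open>det (A A\<^sup>T)\<close> for \<open>S \<union> {i}\<close> is nonzero, which a
  single sign test of \<open>-det\<^sup>2\<close>, of degree at most \<open>4 k\<close>, decides. Every test concerns a subset of
  the \<open>k\<close> rows, so at most \<open>2\<^sup>k\<close> distinct predicates occur. If \<open>Z\<close> has rank \<open>k\<close>, all rows
  form a basis and no test is needed.\<close>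

section \<open>Straight-line programs\<close>

datatype expr = Inp nat | Op gj_op expr expr

fun gj_op_eval :: "gj_op \<Rightarrow> 'a::field \<Rightarrow> 'a \<Rightarrow> 'a" where
  "gj_op_eval GAdd a b = a + b"
| "gj_op_eval GSub a b = a - b"
| "gj_op_eval GMul a b = a * b"
| "gj_op_eval GDiv a b = a / b"

fun eval_expr :: "'a::field list \<Rightarrow> expr \<Rightarrow> 'a" where
  "eval_expr xs (Inp i) = xs ! i"
| "eval_expr xs (Op f a b) = gj_op_eval f (eval_expr xs a) (eval_expr xs b)"

fun expr_vars :: "expr \<Rightarrow> nat set" where
  "expr_vars (Inp i) = {i}"
| "expr_vars (Op f a b) = expr_vars a \<union> expr_vars b"

text \<open>The operation nodes of an expression in post-order: exactly the values that the
  compiled program appends, in the order in which it appends them.\<close>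

fun expr_ops :: "expr \<Rightarrow> expr list" where
  "expr_ops (Inp i) = []"
| "expr_ops (Op f a b) = expr_ops a @ expr_ops b @ [Op f a b]"

lemma gj_apply_real_eq:
  "gj_apply_real f a b = (if f = GDiv \<and> b = 0 then None else Some (gj_op_eval f a b))"
  by (cases f) auto

lemma gj_apply_sym_eq: "gj_apply_sym f a b = gj_op_eval f a b"
  by (cases f) auto

type_synonym instrs = "(gj_op \<times> nat \<times> nat) list"

fun run_instrs :: "instrs \<Rightarrow> 'a::field list \<Rightarrow> 'a list" where
  "run_instrs [] vs = vs"
| "run_instrs ((f, i, j) # is) vs = run_instrs is (vs @ [gj_op_eval f (vs ! i) (vs ! j)])"

fun instrs_wf :: "instrs \<Rightarrow> nat \<Rightarrow> bool" where
  "instrs_wf [] m = True"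
| "instrs_wf ((f, i, j) # is) m = (i < m \<and> j < m \<and> instrs_wf is (Suc m))"

fun instrs_safe :: "instrs \<Rightarrow> 'a::field list \<Rightarrow> bool" where
  "instrs_safe [] vs = True"
| "instrs_safe ((f, i, j) # is) vs =
     ((f = GDiv \<longrightarrow> vs ! j \<noteq> 0) \<and> instrs_safe is (vs @ [gj_op_eval f (vs ! i) (vs ! j)]))"

fun gj_prefix :: "instrs \<Rightarrow> gj \<Rightarrow> gj" where
  "gj_prefix [] P = P"
| "gj_prefix ((f, i, j) # is) P = GCompute f i j (gj_prefix is P)"

lemma run_instrs_append: "run_instrs (is1 @ is2) vs = run_instrs is2 (run_instrs is1 vs)"
  by (induction is1 vs rule: run_instrs.induct) auto

lemma run_instrs_extends: "\<exists>zs. run_instrs is vs = vs @ zs \<and> length zs = length is"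
proof (induction "is" vs rule: run_instrs.induct)
  case (2 f i j "is" vs)
  then show ?case by (metis append.assoc append_Cons append_Nil length_Cons run_instrs.simps(2))
qed auto

lemma length_run_instrs [simp]: "length (run_instrs is vs) = length vs + length is"
  using run_instrs_extends[of "is" vs] by auto

lemma instrs_wf_append: "instrs_wf (is1 @ is2) m \<longleftrightarrow> instrs_wf is1 m \<and> instrs_wf is2 (m + length is1)"
  by (induction is1 m rule: instrs_wf.induct) auto

lemma instrs_safe_append:
  "instrs_safe (is1 @ is2) vs \<longleftrightarrow> instrs_safe is1 vs \<and> instrs_safe is2 (run_instrs is1 vs)"
  by (induction is1 vs rule: instrs_safe.induct) auto

lemma gj_exec_gj_prefix:
  "instrs_wf is (length vs) \<Longrightarrow> instrs_safe is vs \<Longrightarrow> gj_exec (gj_prefix is P) vs = gj_exec P (run_instrs is vs)"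
  by (induction "is" vs rule: instrs_safe.induct) (auto simp: gj_apply_real_eq)

lemma gj_wf_gj_prefix: "gj_wf (gj_prefix is P) m \<longleftrightarrow> instrs_wf is m \<and> gj_wf P (m + length is)"
  by (induction "is" m rule: instrs_wf.induct) auto

lemma gj_sym_preds_gj_prefix: "gj_sym_preds (gj_prefix is P) vs = gj_sym_preds P (run_instrs is vs)"
  by (induction "is" vs rule: run_instrs.induct) (auto simp: gj_apply_sym_eq Let_def)

lemma gj_sym_vals_gj_prefix:
  "gj_sym_vals (gj_prefix is P) vs = set (drop (length vs) (run_instrs is vs)) \<union> gj_sym_vals P (run_instrs is vs)"
proof (induction "is" vs rule: run_instrs.induct)
  case (2 f i j "is" vs)
  let ?v = "gj_op_eval f (vs ! i) (vs ! j)"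
  obtain zs where "run_instrs is (vs @ [?v]) = vs @ ?v # zs"
    using run_instrs_extends[of "is" "vs @ [?v]"] by auto
  then show ?case using 2 by (auto simp: gj_apply_sym_eq Let_def)
qed auto

text \<open>Where the value of an expression is found once its compiled code has run on a value list
  of length \<open>m\<close>.\<close>

fun expr_result :: "expr \<Rightarrow> nat \<Rightarrow> nat" where
  "expr_result (Inp i) m = i"
| "expr_result (Op f a b) m = m + length (expr_ops a) + length (expr_ops b)"

fun compile_expr :: "expr \<Rightarrow> nat \<Rightarrow> instrs" where
  "compile_expr (Inp i) m = []"
| "compile_expr (Op f a b) m =
     (let m' = m + length (expr_ops a)
      in compile_expr a m @ compile_expr b m' @ [(f, expr_result a m, expr_result b m')])"

lemma length_compile_expr [simp]: "length (compile_expr e m) = length (expr_ops e)"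
  by (induction e arbitrary: m) (simp_all add: Let_def)

lemma compile_expr_wf:
  "expr_vars e \<subseteq> {..<m} \<Longrightarrow> instrs_wf (compile_expr e m) m \<and> expr_result e m < m + length (expr_ops e)"
proof (induction e arbitrary: m)
  case (Op f a b)
  have a: "instrs_wf (compile_expr a m) m" "expr_result a m < m + length (expr_ops a)"
    using Op.IH(1) Op.prems by auto
  have "expr_vars b \<subseteq> {..<m + length (expr_ops a)}"
    using Op.prems by auto
  then have b: "instrs_wf (compile_expr b (m + length (expr_ops a))) (m + length (expr_ops a))"
      "expr_result b (m + length (expr_ops a)) < m + length (expr_ops a) + length (expr_ops b)"
    using Op.IH(2) by auto
  show ?case
    using a b by (simp add: instrs_wf_append Let_def)
qed auto

lemma eval_expr_append:
  "expr_vars e \<subseteq> {..<length xs} \<Longrightarrow> eval_expr (xs @ ys) e = eval_expr xs e"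
  by (induction e) (auto simp: nth_append)

lemma expr_vars_ops: "e' \<in> set (expr_ops e) \<Longrightarrow> expr_vars e' \<subseteq> expr_vars e"
  by (induction e) auto

lemma map_eval_expr_ops_append:
  "expr_vars e \<subseteq> {..<length xs} \<Longrightarrow>
     map (eval_expr (xs @ ys)) (expr_ops e) = map (eval_expr xs) (expr_ops e)"
  using eval_expr_append[of _ xs ys] expr_vars_ops[of _ e] by (meson map_eq_conv subset_trans)

lemma map_eval_expr_append:
  "(\<Union>e\<in>set es. expr_vars e) \<subseteq> {..<length xs} \<Longrightarrow> map (eval_expr (xs @ ys)) es = map (eval_expr xs) es"
  by (induction es) (simp_all add: eval_expr_append)

lemma map_eval_exprs_ops_append:
  "(\<Union>e\<in>set es. expr_vars e) \<subseteq> {..<length xs} \<Longrightarrow>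
     map (eval_expr (xs @ ys)) (concat (map expr_ops es)) = map (eval_expr xs) (concat (map expr_ops es))"
  by (induction es) (simp_all add: map_eval_expr_ops_append)

lemma nth_expr_result:
  "expr_vars e \<subseteq> {..<length vs} \<Longrightarrow>
     (vs @ map (eval_expr vs) (expr_ops e)) ! expr_result e (length vs) = eval_expr vs e"
  by (cases e) (auto simp: nth_append)

lemma run_compile_expr:
  "expr_vars e \<subseteq> {..<length vs} \<Longrightarrow>
     run_instrs (compile_expr e (length vs)) vs = vs @ map (eval_expr vs) (expr_ops e)"
proof (induction e arbitrary: vs)
  case (Op f a b)
  define za where "za = map (eval_expr vs) (expr_ops a)"
  define zb where "zb = map (eval_expr vs) (expr_ops b)"
  have vars_b: "expr_vars b \<subseteq> {..<length vs}"
    using Op.prems by simp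
  then have vars_b': "expr_vars b \<subseteq> {..<length (vs @ za)}"
    by auto
  have run_a: "run_instrs (compile_expr a (length vs)) vs = vs @ za"
    using Op by (simp add: za_def)
  have run_b: "run_instrs (compile_expr b (length (vs @ za))) (vs @ za) = vs @ za @ zb"
    using Op.IH(2)[OF vars_b'] vars_b by (simp add: map_eval_expr_ops_append zb_def)
  have "expr_result a (length vs) < length (vs @ za)"
    using compile_expr_wf[of a "length vs"] Op.prems by (simp add: za_def)
  then have "(vs @ za @ zb) ! expr_result a (length vs) = (vs @ za) ! expr_result a (length vs)"
    by (metis append.assoc nth_append_left)
  then have val_a: "(vs @ za @ zb) ! expr_result a (length vs) = eval_expr vs a"
    using nth_expr_result[of a vs] Op.prems by (simp add: za_def)
  have val_b: "(vs @ za @ zb) ! expr_result b (length (vs @ za)) = eval_expr vs b"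
    using nth_expr_result[OF vars_b'] vars_b
    by (simp add: eval_expr_append map_eval_expr_ops_append zb_def)
  show ?case
    using run_a run_b val_a val_b by (simp add: Let_def run_instrs_append za_def zb_def)
qed simp

definition expr_defined_at :: "'a::field list \<Rightarrow> expr \<Rightarrow> bool" where
  "expr_defined_at vs e \<longleftrightarrow> (\<forall>a b. Op GDiv a b \<in> set (expr_ops e) \<longrightarrow> eval_expr vs b \<noteq> 0)"

lemma expr_defined_at_append:
  assumes "expr_vars e \<subseteq> {..<length xs}"
  shows "expr_defined_at (xs @ ys) e \<longleftrightarrow> expr_defined_at xs e"
proof -
  have "eval_expr (xs @ ys) b = eval_expr xs b" if "Op GDiv a b \<in> set (expr_ops e)" for a b
    using expr_vars_ops[OF that] assms by (auto intro: eval_expr_append)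
  then show ?thesis
    unfolding expr_defined_at_def by metis
qed

lemma compile_expr_safe:
  "expr_vars e \<subseteq> {..<length vs} \<Longrightarrow> expr_defined_at vs e \<Longrightarrow>
     instrs_safe (compile_expr e (length vs)) vs"
proof (induction e arbitrary: vs)
  case (Op f a b)
  define za where "za = map (eval_expr vs) (expr_ops a)"
  have vars_b: "expr_vars b \<subseteq> {..<length vs}"
    using Op.prems by simp
  then have vars_b': "expr_vars b \<subseteq> {..<length (vs @ za)}"
    by auto
  have "expr_defined_at vs b"
    using Op.prems(2) by (simp add: expr_defined_at_def)
  then have "expr_defined_at (vs @ za) b"
    by (simp add: expr_defined_at_append[OF vars_b])
  then have safe_b: "instrs_safe (compile_expr b (length (vs @ za))) (vs @ za)"
    using Op.IH(2)[OF vars_b'] by simp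
  have safe_a: "instrs_safe (compile_expr a (length vs)) vs"
    using Op by (auto simp: expr_defined_at_def)
  have val_b: "(vs @ za @ map (eval_expr vs) (expr_ops b)) ! expr_result b (length (vs @ za)) = eval_expr vs b"
    using nth_expr_result[OF vars_b'] vars_b by (simp add: eval_expr_append map_eval_expr_ops_append)
  have "f = GDiv \<longrightarrow> eval_expr vs b \<noteq> 0"
    using Op.prems(2) by (auto simp: expr_defined_at_def)
  then show ?case
    using safe_a safe_b val_b run_compile_expr[of a vs] run_compile_expr[OF vars_b'] Op.prems
    by (simp add: Let_def instrs_safe_append run_instrs_append map_eval_expr_ops_append za_def)
qed simp

fun compile_exprs :: "expr list \<Rightarrow> nat \<Rightarrow> instrs" where
  "compile_exprs [] m = []"
| "compile_exprs (e # es) m = compile_expr e m @ compile_exprs es (m + length (expr_ops e))"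

fun exprs_results :: "expr list \<Rightarrow> nat \<Rightarrow> nat list" where
  "exprs_results [] m = []"
| "exprs_results (e # es) m = expr_result e m # exprs_results es (m + length (expr_ops e))"

lemma length_compile_exprs [simp]: "length (compile_exprs es m) = length (concat (map expr_ops es))"
  by (induction es arbitrary: m) auto

lemma compile_exprs_wf:
  "(\<Union>e\<in>set es. expr_vars e) \<subseteq> {..<m} \<Longrightarrow>
     instrs_wf (compile_exprs es m) m \<and> (\<forall>r\<in>set (exprs_results es m). r < m + length (concat (map expr_ops es)))"
proof (induction es arbitrary: m)
  case (Cons e es)
  have "(\<Union>e'\<in>set es. expr_vars e') \<subseteq> {..<m + length (expr_ops e)}"
    using Cons.prems by auto
  from Cons.IH[OF this] show ?case
    using compile_expr_wf[of e m] Cons.prems by (auto simp: instrs_wf_append)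
qed simp

lemma run_compile_exprs:
  "(\<Union>e\<in>set es. expr_vars e) \<subseteq> {..<length vs} \<Longrightarrow>
     run_instrs (compile_exprs es (length vs)) vs = vs @ map (eval_expr vs) (concat (map expr_ops es))"
proof (induction es arbitrary: vs)
  case (Cons e es)
  let ?ze = "map (eval_expr vs) (expr_ops e)"
  have vars: "(\<Union>e'\<in>set es. expr_vars e') \<subseteq> {..<length vs}"
    using Cons.prems by simp
  then have "(\<Union>e'\<in>set es. expr_vars e') \<subseteq> {..<length (vs @ ?ze)}"
    by auto
  from Cons.IH[OF this]
  have "run_instrs (compile_exprs es (length (vs @ ?ze))) (vs @ ?ze)
      = vs @ ?ze @ map (eval_expr vs) (concat (map expr_ops es))"
    by (simp add: map_eval_exprs_ops_append[OF vars])
  then show ?case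
    using Cons.prems by (simp add: run_instrs_append run_compile_expr)
qed simp

lemma nth_exprs_results:
  "(\<Union>e\<in>set es. expr_vars e) \<subseteq> {..<length vs} \<Longrightarrow>
     map (\<lambda>r. (vs @ map (eval_expr vs) (concat (map expr_ops es))) ! r) (exprs_results es (length vs))
       = map (eval_expr vs) es"
proof (induction es arbitrary: vs)
  case (Cons e es)
  let ?ze = "map (eval_expr vs) (expr_ops e)"
  let ?rest = "map (eval_expr vs) (concat (map expr_ops es))"
  have "expr_result e (length vs) < length (vs @ ?ze)"
    using compile_expr_wf[of e "length vs"] Cons.prems by auto
  then have "(vs @ ?ze @ ?rest) ! expr_result e (length vs) = (vs @ ?ze) ! expr_result e (length vs)"
    by (metis append.assoc nth_append_left)
  also have "\<dots> = eval_expr vs e"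
    using nth_expr_result[of e vs] Cons.prems by simp
  finally have val_e: "(vs @ ?ze @ ?rest) ! expr_result e (length vs) = eval_expr vs e" .
  have vars: "(\<Union>e'\<in>set es. expr_vars e') \<subseteq> {..<length vs}"
    using Cons.prems by simp
  then have "(\<Union>e'\<in>set es. expr_vars e') \<subseteq> {..<length (vs @ ?ze)}"
    by auto
  from Cons.IH[OF this]
  have "map (\<lambda>r. (vs @ ?ze @ ?rest) ! r) (exprs_results es (length (vs @ ?ze))) = map (eval_expr vs) es"
    by (simp add: map_eval_exprs_ops_append[OF vars] map_eval_expr_append[OF vars])
  then show ?case
    using val_e by simp
qed simp

lemma compile_exprs_safe:
  "(\<Union>e\<in>set es. expr_vars e) \<subseteq> {..<length vs} \<Longrightarrow> \<forall>e\<in>set es. expr_defined_at vs e \<Longrightarrow>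
     instrs_safe (compile_exprs es (length vs)) vs"
proof (induction es arbitrary: vs)
  case (Cons e es)
  let ?ze = "map (eval_expr vs) (expr_ops e)"
  have vars: "(\<Union>e'\<in>set es. expr_vars e') \<subseteq> {..<length vs}"
    using Cons.prems by simp
  then have "(\<Union>e'\<in>set es. expr_vars e') \<subseteq> {..<length (vs @ ?ze)}"
    by auto
  moreover have "\<forall>e'\<in>set es. expr_defined_at (vs @ ?ze) e'"
  proof
    fix e' assume e': "e' \<in> set es"
    then have "expr_vars e' \<subseteq> {..<length vs}"
      using vars by auto
    then show "expr_defined_at (vs @ ?ze) e'"
      using Cons.prems(2) e' by (simp add: expr_defined_at_append)
  qed
  ultimately have "instrs_safe (compile_exprs es (length (vs @ ?ze))) (vs @ ?ze)"
    by (rule Cons.IH)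
  then show ?case
    using Cons.prems by (simp add: instrs_safe_append compile_expr_safe run_compile_expr)
qed simp

definition output_program :: "expr list \<Rightarrow> nat \<Rightarrow> gj" where
  "output_program es m = gj_prefix (compile_exprs es m) (GOutput (exprs_results es m))"

lemma gj_wf_output_program: "(\<Union>e\<in>set es. expr_vars e) \<subseteq> {..<m} \<Longrightarrow> gj_wf (output_program es m) m"
  using compile_exprs_wf[of es m] by (auto simp: output_program_def gj_wf_gj_prefix)

lemma gj_exec_output_program:
  assumes vars: "(\<Union>e\<in>set es. expr_vars e) \<subseteq> {..<length vs}" and "\<forall>e\<in>set es. expr_defined_at vs e"
  shows "gj_exec (output_program es (length vs)) vs = Some (map (eval_expr vs) es)"
proof -
  have "gj_exec (output_program es (length vs)) vs
      = gj_exec (GOutput (exprs_results es (length vs))) (vs @ map (eval_expr vs) (concat (map expr_ops es)))"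
    unfolding output_program_def using compile_exprs_wf[OF vars] assms
    by (simp add: gj_exec_gj_prefix compile_exprs_safe run_compile_exprs)
  also have "\<dots> = Some (map (eval_expr vs) es)"
    using compile_exprs_wf[OF vars] nth_exprs_results[OF vars] by auto
  finally show ?thesis .
qed

lemma gj_sym_vals_output_program:
  "(\<Union>e\<in>set es. expr_vars e) \<subseteq> {..<length vs} \<Longrightarrow>
     gj_sym_vals (output_program es (length vs)) vs = eval_expr vs ` (\<Union>e\<in>set es. set (expr_ops e))"
  by (simp add: output_program_def gj_sym_vals_gj_prefix run_compile_exprs)

lemma gj_sym_preds_output_program: "gj_sym_preds (output_program es m) vs = {}"
  by (simp add: output_program_def gj_sym_preds_gj_prefix)

definition test_program :: "expr \<Rightarrow> gj \<Rightarrow> gj \<Rightarrow> nat \<Rightarrow> gj" where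
  "test_program e P Q m = gj_prefix (compile_expr e m) (GBranch (expr_result e m) P Q)"

lemma gj_wf_test_program:
  assumes "expr_vars e \<subseteq> {..<m}" "gj_wf P (m + length (expr_ops e))" "gj_wf Q (m + length (expr_ops e))"
  shows "gj_wf (test_program e P Q m) m"
  using compile_expr_wf[of e m] assms by (simp add: test_program_def gj_wf_gj_prefix)

lemma gj_exec_test_program:
  fixes vs :: "real list"
  assumes "expr_vars e \<subseteq> {..<length vs}" "expr_defined_at vs e"
  defines "vs' \<equiv> vs @ map (eval_expr vs) (expr_ops e)"
  shows "gj_exec (test_program e P Q (length vs)) vs
    = (if eval_expr vs e \<ge> 0 then gj_exec P vs' else gj_exec Q vs')"
proof -
  have "gj_exec (test_program e P Q (length vs)) vs = gj_exec (GBranch (expr_result e (length vs)) P Q) vs'"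
    unfolding test_program_def vs'_def using compile_expr_wf[of e "length vs"] assms
    by (simp add: gj_exec_gj_prefix compile_expr_safe run_compile_expr)
  then show ?thesis
    using compile_expr_wf[of e "length vs"] nth_expr_result[of e vs] assms by (simp add: vs'_def)
qed

lemma gj_sym_test_program:
  assumes "expr_vars e \<subseteq> {..<length vs}"
  defines "vs' \<equiv> vs @ map (eval_expr vs) (expr_ops e)"
  shows "gj_sym_vals (test_program e P Q (length vs)) vs
      = eval_expr vs ` set (expr_ops e) \<union> gj_sym_vals P vs' \<union> gj_sym_vals Q vs'"
    and "gj_sym_preds (test_program e P Q (length vs)) vs
      = insert (eval_expr vs e) (gj_sym_preds P vs' \<union> gj_sym_preds Q vs')"
  unfolding vs'_def using assms nth_expr_result[of e vs]
  by (simp_all add: test_program_def gj_sym_vals_gj_prefix gj_sym_preds_gj_prefix run_compile_expr Un_assoc)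

lemma finite_gj_sym_vals: "finite (gj_sym_vals P vs)"
  by (induction P vs rule: gj_sym_vals.induct) (auto simp: Let_def)

section \<open>Degrees of polynomials and rational functions\<close>

lemma mon_deg_eq_sum:
  "finite K \<Longrightarrow> Poly_Mapping.keys m \<subseteq> K \<Longrightarrow> mon_deg m = (\<Sum>i\<in>K. Poly_Mapping.lookup m i)"
  unfolding mon_deg_def by (rule sum.mono_neutral_left) (auto simp: in_keys_iff)

lemma mon_deg_add: "mon_deg (a + b) = mon_deg a + mon_deg b"
proof -
  let ?K = "Poly_Mapping.keys a \<union> Poly_Mapping.keys b"
  have "mon_deg (a + b) = (\<Sum>i\<in>?K. Poly_Mapping.lookup (a + b) i)"
    by (rule mon_deg_eq_sum) (use keys_add[of a b] in auto)
  also have "\<dots> = (\<Sum>i\<in>?K. Poly_Mapping.lookup a i) + (\<Sum>i\<in>?K. Poly_Mapping.lookup b i)"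
    by (simp add: lookup_add sum.distrib)
  also have "\<dots> = mon_deg a + mon_deg b"
    using mon_deg_eq_sum[of ?K a] mon_deg_eq_sum[of ?K b] by simp
  finally show ?thesis .
qed

lemma mpoly_deg_le_iff: "mpoly_deg p \<le> D \<longleftrightarrow> (\<forall>m\<in>Poly_Mapping.keys p. mon_deg m \<le> D)"
  unfolding mpoly_deg_def by auto

lemma mon_deg_le_mpoly_deg: "m \<in> Poly_Mapping.keys p \<Longrightarrow> mon_deg m \<le> mpoly_deg p"
  using mpoly_deg_le_iff by blast

lemma mpoly_deg_add_le: "mpoly_deg (p + q) \<le> max (mpoly_deg p) (mpoly_deg q)"
  unfolding mpoly_deg_le_iff
  using keys_add[of p q] mon_deg_le_mpoly_deg[of _ p] mon_deg_le_mpoly_deg[of _ q] by fastforce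

lemma mpoly_deg_diff_le: "mpoly_deg (p - q) \<le> max (mpoly_deg p) (mpoly_deg q)"
  unfolding mpoly_deg_le_iff
  using keys_diff[of p q] mon_deg_le_mpoly_deg[of _ p] mon_deg_le_mpoly_deg[of _ q] by fastforce

lemma mpoly_deg_mult_le: "mpoly_deg (p * q) \<le> mpoly_deg p + mpoly_deg q"
  unfolding mpoly_deg_le_iff
proof
  fix m assume "m \<in> Poly_Mapping.keys (p * q)"
  then obtain a b where "m = a + b" "a \<in> Poly_Mapping.keys p" "b \<in> Poly_Mapping.keys q"
    using keys_mult[of p q] by blast
  then show "mon_deg m \<le> mpoly_deg p + mpoly_deg q"
    using mon_deg_le_mpoly_deg[of a p] mon_deg_le_mpoly_deg[of b q] by (simp add: mon_deg_add)
qed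

lemma mpoly_deg_one [simp]: "mpoly_deg 1 = 0"
  unfolding mpoly_deg_def mon_deg_def by simp

lemma mpoly_deg_var_le: "mpoly_deg (mpoly_var i) \<le> 1"
  unfolding mpoly_deg_le_iff mpoly_var_def mon_deg_def by simp

lemma ratfun_deg_Fract_le: "q \<noteq> 0 \<Longrightarrow> ratfun_deg (Fract p q) \<le> max (mpoly_deg p) (mpoly_deg q)"
  unfolding ratfun_deg_def by (rule Least_le) blast

lemma ratfun_deg_poly_le: "ratfun_deg (Fract p 1) \<le> mpoly_deg p"
  using ratfun_deg_Fract_le[of 1 p] by simp

lemma ratfun_deg_quotient_le: "ratfun_deg (Fract p 1 / Fract q 1) \<le> max (mpoly_deg p) (mpoly_deg q)"
proof (cases "q = 0")
  case True
  then have "Fract p 1 / Fract q 1 = Fract 0 1"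
    by (simp add: Zero_fract_def[symmetric])
  then show ?thesis
    using ratfun_deg_poly_le[of 0] by (simp add: mpoly_deg_def)
next
  case False
  then show ?thesis
    using ratfun_deg_Fract_le[of q p] by simp
qed

fun expr_degree :: "expr \<Rightarrow> nat" where
  "expr_degree (Inp i) = 1"
| "expr_degree (Op f a b) = (if f = GMul then expr_degree a + expr_degree b else max (expr_degree a) (expr_degree b))"

fun div_free :: "expr \<Rightarrow> bool" where
  "div_free (Inp i) = True"
| "div_free (Op f a b) \<longleftrightarrow> f \<noteq> GDiv \<and> div_free a \<and> div_free b"

lemma length_gj_inputs [simp]: "length (gj_inputs n) = n"
  unfolding gj_inputs_def by simp

lemma nth_gj_inputs: "i < n \<Longrightarrow> gj_inputs n ! i = Fract (mpoly_var i) 1"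
  unfolding gj_inputs_def by simp

lemma eval_div_free_poly:
  assumes "div_free e" "expr_vars e \<subseteq> {..<n}"
  shows "\<exists>p. eval_expr (gj_inputs n) e = Fract p 1 \<and> mpoly_deg p \<le> expr_degree e"
  using assms
proof (induction e)
  case (Inp i)
  then show ?case
    using mpoly_deg_var_le[of i] by (auto simp: nth_gj_inputs)
next
  case (Op f a b)
  then obtain p q where p: "eval_expr (gj_inputs n) a = Fract p 1" "mpoly_deg p \<le> expr_degree a"
    and q: "eval_expr (gj_inputs n) b = Fract q 1" "mpoly_deg q \<le> expr_degree b"
    by auto
  show ?case
  proof (cases f)
    case GAdd
    then show ?thesis
      using p q mpoly_deg_add_le[of p q] by (intro exI[of _ "p + q"]) auto
  next
    case GSub
    then show ?thesis
      using p q mpoly_deg_diff_le[of p q] by (intro exI[of _ "p - q"]) auto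
  next
    case GMul
    then show ?thesis
      using p q mpoly_deg_mult_le[of p q] by (intro exI[of _ "p * q"]) auto
  next
    case GDiv
    then show ?thesis
      using Op.prems by simp
  qed
qed

lemma ratfun_deg_eval_div_free:
  "div_free e \<Longrightarrow> expr_vars e \<subseteq> {..<n} \<Longrightarrow> ratfun_deg (eval_expr (gj_inputs n) e) \<le> expr_degree e"
  using eval_div_free_poly ratfun_deg_poly_le order_trans by metis

lemma expr_degree_ops_le: "e' \<in> set (expr_ops e) \<Longrightarrow> expr_degree e' \<le> expr_degree e"
  by (induction e) auto

lemma div_free_ops: "div_free e \<Longrightarrow> e' \<in> set (expr_ops e) \<Longrightarrow> div_free e'"
  by (induction e) auto

lemma div_free_no_division: "div_free e \<Longrightarrow> Op GDiv a b \<notin> set (expr_ops e)"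
  using div_free_ops by fastforce

definition bounded_quotient :: "nat \<Rightarrow> expr \<Rightarrow> bool" where
  "bounded_quotient B e \<longleftrightarrow> (div_free e \<and> expr_degree e \<le> B) \<or>
     (\<exists>a b. e = Op GDiv a b \<and> div_free a \<and> div_free b \<and> expr_degree a \<le> B \<and> expr_degree b \<le> B)"

lemma bounded_quotient_division:
  "bounded_quotient B e \<Longrightarrow> Op GDiv a b \<in> set (expr_ops e) \<Longrightarrow> e = Op GDiv a b"
  unfolding bounded_quotient_def using div_free_no_division by auto

lemma ratfun_deg_ops_bounded_quotient:
  assumes "bounded_quotient B e" "expr_vars e \<subseteq> {..<n}" "e' \<in> set (expr_ops e)"
  shows "ratfun_deg (eval_expr (gj_inputs n) e') \<le> B"
proof -
  have vars: "expr_vars e' \<subseteq> {..<n}"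
    using expr_vars_ops[OF assms(3)] assms(2) by blast
  consider "div_free e" "expr_degree e \<le> B"
    | a b where "e = Op GDiv a b" "div_free a" "div_free b" "expr_degree a \<le> B" "expr_degree b \<le> B"
    using assms(1) unfolding bounded_quotient_def by blast
  then show ?thesis
  proof cases
    case 1
    then show ?thesis
      using ratfun_deg_eval_div_free[OF div_free_ops[OF 1(1) assms(3)] vars]
        expr_degree_ops_le[OF assms(3)] by linarith
  next
    case (2 a b)
    show ?thesis
    proof (cases "e' = e")
      case True
      obtain p where p: "eval_expr (gj_inputs n) a = Fract p 1" "mpoly_deg p \<le> expr_degree a"
        using eval_div_free_poly[OF 2(2), of n] assms(2) 2(1) by auto
      obtain q where q: "eval_expr (gj_inputs n) b = Fract q 1" "mpoly_deg q \<le> expr_degree b"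
        using eval_div_free_poly[OF 2(3), of n] assms(2) 2(1) by auto
      show ?thesis
        using True 2 p q ratfun_deg_quotient_le[of p q] by simp
    next
      case False
      then have "e' \<in> set (expr_ops a) \<or> e' \<in> set (expr_ops b)"
        using assms(3) 2(1) by auto
      then show ?thesis
        using ratfun_deg_eval_div_free[OF _ vars] div_free_ops expr_degree_ops_le 2 by (metis le_trans)
    qed
  qed
qed

lemma expr_defined_at_div_free: "div_free e \<Longrightarrow> expr_defined_at vs e"
  by (simp add: expr_defined_at_def div_free_no_division)

lemma gj_degree_le:
  "\<forall>v\<in>gj_sym_vals P (gj_inputs n). ratfun_deg v \<le> B \<Longrightarrow> 1 \<le> B \<Longrightarrow> gj_degree n P \<le> B"
  unfolding gj_degree_def using finite_gj_sym_vals[of P "gj_inputs n"] by auto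

text \<open>GJ algorithms have no constants; zero is computed as \<open>x\<^sub>0 - x\<^sub>0\<close>, so it needs at
  least one input.\<close>

definition zero_expr :: expr where
  "zero_expr = Op GSub (Inp 0) (Inp 0)"

fun signed_sum_expr :: "(bool \<times> expr) list \<Rightarrow> expr" where
  "signed_sum_expr [] = zero_expr"
| "signed_sum_expr ((s, e) # l) = Op (if s then GAdd else GSub) (signed_sum_expr l) e"

definition sum_expr :: "expr list \<Rightarrow> expr" where
  "sum_expr es = signed_sum_expr (map (Pair True) es)"

lemma eval_zero_expr [simp]: "eval_expr xs zero_expr = 0"
  by (simp add: zero_expr_def)

lemma expr_degree_zero_expr [simp]: "expr_degree zero_expr = 1"
  by (simp add: zero_expr_def)

lemma div_free_zero_expr [simp]: "div_free zero_expr"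
  by (simp add: zero_expr_def)

lemma expr_vars_zero_expr [simp]: "expr_vars zero_expr = {0}"
  by (simp add: zero_expr_def)

lemma eval_signed_sum_expr:
  "eval_expr xs (signed_sum_expr l) = (\<Sum>(s, e)\<leftarrow>l. if s then eval_expr xs e else - eval_expr xs e)"
  by (induction l rule: signed_sum_expr.induct) auto

lemma eval_sum_expr: "eval_expr xs (sum_expr es) = (\<Sum>e\<leftarrow>es. eval_expr xs e)"
  by (simp add: sum_expr_def eval_signed_sum_expr comp_def)

lemma expr_degree_signed_sum_expr_le:
  "\<forall>(s, e)\<in>set l. expr_degree e \<le> B \<Longrightarrow> 1 \<le> B \<Longrightarrow> expr_degree (signed_sum_expr l) \<le> B"
  by (induction l rule: signed_sum_expr.induct) auto

lemma div_free_signed_sum_expr: "\<forall>(s, e)\<in>set l. div_free e \<Longrightarrow> div_free (signed_sum_expr l)"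
  by (induction l rule: signed_sum_expr.induct) auto

lemma expr_vars_signed_sum_expr:
  "\<forall>(s, e)\<in>set l. expr_vars e \<subseteq> {..<n} \<Longrightarrow> 0 < n \<Longrightarrow> expr_vars (signed_sum_expr l) \<subseteq> {..<n}"
  by (induction l rule: signed_sum_expr.induct) auto

definition remove_nth :: "nat \<Rightarrow> 'a list \<Rightarrow> 'a list" where
  "remove_nth j xs = take j xs @ drop (Suc j) xs"

lemma length_remove_nth [simp]: "j < length xs \<Longrightarrow> length (remove_nth j xs) = length xs - 1"
  unfolding remove_nth_def by simp

lemma set_remove_nth_subset: "set (remove_nth j xs) \<subseteq> set xs"
  unfolding remove_nth_def using set_take_subset set_drop_subset by fastforce

lemma nth_remove_nth:
  "j < length xs \<Longrightarrow> i < length xs - 1 \<Longrightarrow> remove_nth j xs ! i = xs ! (if i < j then i else Suc i)"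
  unfolding remove_nth_def by (auto simp: nth_append min_def)

fun det_expr :: "(nat \<Rightarrow> nat \<Rightarrow> expr) \<Rightarrow> nat list \<Rightarrow> nat list \<Rightarrow> expr" where
  "det_expr M [] cs = zero_expr"
| "det_expr M [r] cs = M r (hd cs)"
| "det_expr M (r # r' # rs) cs = signed_sum_expr
     (map (\<lambda>j. (even j, Op GMul (M r (cs ! j)) (det_expr M (r' # rs) (remove_nth j cs)))) [0..<length cs])"

lemma eval_det_expr:
  "rs \<noteq> [] \<Longrightarrow> length cs = length rs \<Longrightarrow>
     eval_expr xs (det_expr M rs cs) = det (mat (length rs) (length rs) (\<lambda>(i, j). eval_expr xs (M (rs ! i) (cs ! j))))"
proof (induction M rs cs rule: det_expr.induct)
  case (2 M r cs)
  then obtain c where "cs = [c]"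
    by (cases cs) auto
  then show ?case
    by (simp add: det_single)
next
  case (3 M r r' rs cs)
  let ?n = "length (r # r' # rs)"
  let ?A = "mat ?n ?n (\<lambda>(i, j). eval_expr xs (M ((r # r' # rs) ! i) (cs ! j)))"
  let ?minor = "\<lambda>j. mat (length (r' # rs)) (length (r' # rs))
      (\<lambda>(i, j'). eval_expr xs (M ((r' # rs) ! i) (remove_nth j cs ! j')))"
  let ?t = "\<lambda>j. eval_expr xs (M r (cs ! j)) * eval_expr xs (det_expr M (r' # rs) (remove_nth j cs))"
  have minor: "mat_delete ?A 0 j = ?minor j" if "j < ?n" for j
    by (rule eq_matI) (use that "3.prems" in \<open>auto simp: mat_delete_def nth_remove_nth\<close>)
  have IH: "eval_expr xs (det_expr M (r' # rs) (remove_nth j cs)) = det (?minor j)" if "j < ?n" for j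
  proof -
    have "j \<in> set [0..<length cs]"
      unfolding set_upt using that "3.prems" by simp
    from "3.IH"[OF this] show ?thesis
      using that "3.prems" by simp
  qed
  have "det ?A = (\<Sum>j<?n. ?A $$ (0, j) * cofactor ?A 0 j)"
    by (rule laplace_expansion_row) auto
  also have "\<dots> = (\<Sum>j<length cs. if even j then ?t j else - ?t j)"
  proof (rule sum.cong)
    fix j assume "j \<in> {..<length cs}"
    then have j: "j < ?n"
      using "3.prems" by simp
    have "?A $$ (0, j) * cofactor ?A 0 j = eval_expr xs (M r (cs ! j)) * ((-1) ^ j * det (?minor j))"
      unfolding cofactor_def minor[OF j] using j "3.prems" by simp
    then show "?A $$ (0, j) * cofactor ?A 0 j = (if even j then ?t j else - ?t j)"
      by (simp add: IH[OF j] minus_one_power_iff)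
  qed (use "3.prems" in simp)
  also have "\<dots> = eval_expr xs (det_expr M (r # r' # rs) cs)"
    by (simp add: eval_signed_sum_expr interv_sum_list_conv_sum_set_nat lessThan_atLeast0 comp_def cong: if_cong)
  finally show ?case ..
qed simp

lemma expr_degree_det_expr_le:
  "\<forall>a b. expr_degree (M a b) \<le> c \<Longrightarrow> 1 \<le> c \<Longrightarrow> rs \<noteq> [] \<Longrightarrow>
     expr_degree (det_expr M rs cs) \<le> c * length rs"
proof (induction M rs cs rule: det_expr.induct)
  case (3 M r r' rs cs)
  have "expr_degree (Op GMul (M r (cs ! j)) (det_expr M (r' # rs) (remove_nth j cs))) \<le> c * length (r # r' # rs)"
    if "j < length cs" for j
  proof -
    have "j \<in> set [0..<length cs]"
      using that by simp
    from "3.IH"[OF this] have "expr_degree (det_expr M (r' # rs) (remove_nth j cs)) \<le> c * length (r' # rs)"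
      using "3.prems" by simp
    moreover have "expr_degree (M r (cs ! j)) \<le> c"
      using "3.prems"(1) by simp
    ultimately show ?thesis
      by simp
  qed
  then show ?case
    unfolding det_expr.simps using "3.prems" by (intro expr_degree_signed_sum_expr_le) auto
qed auto

lemma div_free_det_expr: "\<forall>a b. div_free (M a b) \<Longrightarrow> div_free (det_expr M rs cs)"
  by (induction M rs cs rule: det_expr.induct) (auto intro!: div_free_signed_sum_expr)

lemma expr_vars_det_expr:
  "(\<Union>a\<in>set rs. \<Union>b\<in>set cs. expr_vars (M a b)) \<subseteq> {..<n} \<Longrightarrow> 0 < n \<Longrightarrow> length cs = length rs \<Longrightarrow>
     expr_vars (det_expr M rs cs) \<subseteq> {..<n}"
proof (induction M rs cs rule: det_expr.induct)
  case (2 M r cs)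
  then show ?case
    by (cases cs) auto
next
  case (3 M r r' rs cs)
  have det_vars: "expr_vars (det_expr M (r' # rs) (remove_nth j cs)) \<subseteq> {..<n}" if "j < length cs" for j
  proof (rule "3.IH")
    have "(\<Union>a\<in>set (r' # rs). \<Union>b\<in>set (remove_nth j cs). expr_vars (M a b))
        \<subseteq> (\<Union>a\<in>set (r # r' # rs). \<Union>b\<in>set cs. expr_vars (M a b))"
      using set_remove_nth_subset[of j cs] by auto
    then show "(\<Union>a\<in>set (r' # rs). \<Union>b\<in>set (remove_nth j cs). expr_vars (M a b)) \<subseteq> {..<n}"
      using "3.prems"(1) by (rule order_trans)
  qed (use "3.prems" that in auto)
  have "(\<Union>b\<in>set cs. expr_vars (M r b)) \<subseteq> {..<n}"
    using "3.prems"(1) by simp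
  then have "expr_vars (M r (cs ! j)) \<subseteq> {..<n}" if "j < length cs" for j
    by (rule order_trans[OF UN_upper[OF nth_mem[OF that]]])
  then show ?case
    unfolding det_expr.simps using "3.prems" det_vars by (intro expr_vars_signed_sum_expr) auto
qed auto

section \<open>The Moore--Penrose pseudo-inverse\<close>

lemma mat_mult_assoc:
  "dim_col A = dim_row B \<Longrightarrow> dim_col B = dim_row C \<Longrightarrow> A * B * C = A * (B * (C :: 'a::comm_semiring_0 mat))"
  by (rule assoc_mult_mat[of A "dim_row A" "dim_col A" B "dim_col B" C "dim_col C"]) auto

lemma transpose_mat_mult:
  "dim_col A = dim_row B \<Longrightarrow> transpose_mat (A * B) = transpose_mat B * transpose_mat (A :: 'a::comm_semiring_0 mat)"
  by (rule transpose_mult[of A "dim_row A" "dim_col A" B "dim_col B"]) auto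

definition penrose_conditions :: "real mat \<Rightarrow> real mat \<Rightarrow> bool" where
  "penrose_conditions Z X \<longleftrightarrow> X \<in> carrier_mat (dim_col Z) (dim_row Z) \<and>
      Z * X * Z = Z \<and> X * Z * X = X \<and>
      transpose_mat (Z * X) = Z * X \<and> transpose_mat (X * Z) = X * Z"

text \<open>Penrose's uniqueness argument: \<open>X Z\<close> and \<open>Z X\<close> are determined by \<open>Z\<close>, since
  \<open>X\<^sub>1 Z = (X\<^sub>1 Z)\<^sup>T = (X\<^sub>1 Z X\<^sub>2 Z)\<^sup>T = X\<^sub>2 Z X\<^sub>1 Z = X\<^sub>2 Z\<close>, and then
  \<open>X\<^sub>1 = X\<^sub>1 Z X\<^sub>1 = X\<^sub>2 Z X\<^sub>2 = X\<^sub>2\<close>.\<close>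

lemma penrose_conditions_unique:
  assumes Z: "Z \<in> carrier_mat k d" and p1: "penrose_conditions Z X1" and p2: "penrose_conditions Z X2"
  shows "X1 = X2"
proof -
  have X1: "X1 \<in> carrier_mat d k" and X2: "X2 \<in> carrier_mat d k"
    using p1 p2 Z unfolding penrose_conditions_def by auto
  note P1 = p1[unfolded penrose_conditions_def] and P2 = p2[unfolded penrose_conditions_def]
  note dims = carrier_matD[OF X1] carrier_matD[OF X2] carrier_matD[OF Z]
  have XZ: "X1 * Z = X2 * Z"
  proof -
    have "X1 * Z = transpose_mat (X1 * Z)"
      using P1 by simp
    also have "\<dots> = transpose_mat ((X1 * Z) * (X2 * Z))"
      using P2 dims by (metis mat_mult_assoc index_mult_mat(2,3))
    also have "\<dots> = (X2 * Z) * (X1 * Z)"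
      using P1 P2 dims by (simp add: transpose_mat_mult)
    also have "\<dots> = X2 * Z"
      using P1 dims by (metis mat_mult_assoc index_mult_mat(2,3))
    finally show ?thesis .
  qed
  have ZX: "Z * X1 = Z * X2"
  proof -
    have "Z * X1 = transpose_mat (Z * X1)"
      using P1 by simp
    also have "\<dots> = transpose_mat ((Z * X2) * (Z * X1))"
      using P2 dims by (metis mat_mult_assoc index_mult_mat(2,3))
    also have "\<dots> = (Z * X1) * (Z * X2)"
      using P1 P2 dims by (simp add: transpose_mat_mult)
    also have "\<dots> = Z * X2"
      using P1 dims by (metis mat_mult_assoc index_mult_mat(2,3))
    finally show ?thesis .
  qed
  have "X1 = X1 * Z * X1"
    using P1 by simp
  also have "\<dots> = X2 * Z * X2"
    using XZ ZX dims by (metis mat_mult_assoc index_mult_mat(2,3))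
  also have "\<dots> = X2"
    using P2 by simp
  finally show ?thesis .
qed

lemma pinv_eqI:
  assumes "Z \<in> carrier_mat k d" "penrose_conditions Z X"
  shows "pinv Z = X"
proof -
  have "pinv Z = (THE X. penrose_conditions Z X)"
    unfolding pinv_def penrose_conditions_def by simp
  also have "\<dots> = X"
    using assms penrose_conditions_unique by blast
  finally show ?thesis .
qed

definition adj_inv :: "real mat \<Rightarrow> real mat" where
  "adj_inv M = (1 / det M) \<cdot>\<^sub>m adj_mat M"

lemma adj_inv:
  assumes M: "M \<in> carrier_mat n n" and "det M \<noteq> 0"
  shows "adj_inv M \<in> carrier_mat n n" "M * adj_inv M = 1\<^sub>m n" "adj_inv M * M = 1\<^sub>m n"
proof -
  note adj = adj_mat[OF M]
  show "adj_inv M \<in> carrier_mat n n"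
    unfolding adj_inv_def using adj by simp
  have "M * adj_inv M = (1 / det M) \<cdot>\<^sub>m (M * adj_mat M)"
    unfolding adj_inv_def by (rule mult_smult_distrib[OF M adj(1)])
  then show "M * adj_inv M = 1\<^sub>m n"
    unfolding adj(2) using assms(2) by (auto intro!: eq_matI)
  have "adj_inv M * M = (1 / det M) \<cdot>\<^sub>m (adj_mat M * M)"
    unfolding adj_inv_def by (rule mult_smult_assoc_mat[OF adj(1) M])
  then show "adj_inv M * M = 1\<^sub>m n"
    unfolding adj(3) using assms(2) by (auto intro!: eq_matI)
qed

lemma transpose_adj_inv:
  assumes M: "M \<in> carrier_mat n n" and "det M \<noteq> 0" and sym: "transpose_mat M = M"
  shows "transpose_mat (adj_inv M) = adj_inv M"
proof -
  note I = adj_inv[OF assms(1,2)]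
  have left: "transpose_mat (adj_inv M) * M = 1\<^sub>m n"
    using transpose_mat_mult[of M "adj_inv M"] M I sym by simp
  have "transpose_mat (adj_inv M) = transpose_mat (adj_inv M) * (M * adj_inv M)"
    using I by simp
  also have "\<dots> = transpose_mat (adj_inv M) * M * adj_inv M"
    using I M by (simp add: mat_mult_assoc)
  also have "\<dots> = adj_inv M"
    using I left by simp
  finally show ?thesis .
qed

lemma transpose_mult_vec_zero_of_gram:
  fixes Z :: "real mat"
  assumes Z: "Z \<in> carrier_mat k d" and v: "v \<in> carrier_vec k" and "(Z * transpose_mat Z) *\<^sub>v v = 0\<^sub>v k"
  shows "transpose_mat Z *\<^sub>v v = 0\<^sub>v d"
proof -
  have w: "transpose_mat Z *\<^sub>v v \<in> carrier_vec d"
    using Z v by simp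
  have "(transpose_mat Z *\<^sub>v v) \<bullet> (transpose_mat Z *\<^sub>v v) = (Z *\<^sub>v (transpose_mat Z *\<^sub>v v)) \<bullet> v"
    using transpose_vec_mult_scalar[of "transpose_mat Z" d k v "transpose_mat Z *\<^sub>v v"] Z v w by simp
  also have "Z *\<^sub>v (transpose_mat Z *\<^sub>v v) = (Z * transpose_mat Z) *\<^sub>v v"
    using Z v by (simp add: assoc_mult_mat_vec)
  finally have "(transpose_mat Z *\<^sub>v v) \<bullet> (transpose_mat Z *\<^sub>v v) = 0"
    using assms(3) v by simp
  then show ?thesis
    using conjugate_square_eq_0_vec[OF w] by simp
qed

lemma det_gram_nonzero_of_left_inverse:
  fixes W :: "real mat"
  assumes W: "W \<in> carrier_mat k s" and E: "E \<in> carrier_mat s k" and EW: "E * W = 1\<^sub>m s"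
  shows "det (transpose_mat W * W) \<noteq> 0"
proof
  assume "det (transpose_mat W * W) = 0"
  then obtain v where v: "v \<in> carrier_vec s" "v \<noteq> 0\<^sub>v s" "(transpose_mat W * W) *\<^sub>v v = 0\<^sub>v s"
    using det_0_iff_vec_prod_zero_field[of "transpose_mat W * W" s] W by auto
  have "W *\<^sub>v v = 0\<^sub>v k"
    using transpose_mult_vec_zero_of_gram[of "transpose_mat W" s k v] W v by simp
  then have "(E * W) *\<^sub>v v = 0\<^sub>v s"
    using E W v by auto
  then show False
    using EW v by simp
qed

lemma eq_zero_of_orthogonal_cols:
  fixes Z :: "real mat"
  assumes Z: "Z \<in> carrier_mat k d" and rank: "vec_space.rank k Z = k" and v: "v \<in> carrier_vec k"
    and orth: "\<forall>c\<in>set (cols Z). c \<bullet> v = 0"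
  shows "v = 0\<^sub>v k"
proof -
  interpret vec_space "TYPE(real)" k .
  have cols: "set (cols Z) \<subseteq> carrier_vec k"
    using Z cols_dim by blast
  obtain S where S: "finite S" "maximal S (\<lambda>T. T \<subseteq> set (cols Z) \<and> lin_indpt T)"
    using maximal_exists_superset[of "set (cols Z)" "\<lambda>T. T \<subseteq> set (cols Z) \<and> lin_indpt T" "{}"]
    unfolding lin_dep_def by auto
  have SZ: "S \<subseteq> set (cols Z)" "lin_indpt S"
    using S(2) unfolding maximal_def by auto
  text \<open>Full rank means that the columns of \<open>Z\<close> span \<open>\<real>\<^sup>k\<close>.\<close>
  have "basis S"
    using dim_li_is_basis[OF fin_dim S(1) _ SZ(2)] SZ(1) cols rank_card_indpt[OF Z S(2)] rank dim_is_n
    by auto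
  then have span: "span S = carrier_vec k"
    unfolding basis_def by auto
  have "v \<in> orthogonal_complement S"
    unfolding orthogonal_complement_def
  proof (intro CollectI conjI ballI)
    fix y assume "y \<in> S"
    then have "y \<in> set (cols Z)" "y \<in> carrier_vec k"
      using SZ(1) cols by auto
    then show "v \<bullet> y = 0"
      using orth comm_scalar_prod[OF v] by metis
  qed (rule v)
  then have "v \<in> orthogonal_complement (span S)"
    using SZ(1) cols by simp
  then have "v \<bullet> v = 0"
    using span v unfolding orthogonal_complement_def by auto
  then show ?thesis
    using conjugate_square_eq_0_vec[OF v] by simp
qed

lemma det_gram_nonzero_of_rank:
  fixes Z :: "real mat"
  assumes Z: "Z \<in> carrier_mat k d" and rank: "vec_space.rank k Z = k"
  shows "det (Z * transpose_mat Z) \<noteq> 0"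
proof
  assume "det (Z * transpose_mat Z) = 0"
  then obtain v where v: "v \<in> carrier_vec k" "v \<noteq> 0\<^sub>v k" "(Z * transpose_mat Z) *\<^sub>v v = 0\<^sub>v k"
    using det_0_iff_vec_prod_zero_field[of "Z * transpose_mat Z" k] Z by auto
  have Zv: "transpose_mat Z *\<^sub>v v = 0\<^sub>v d"
    by (rule transpose_mult_vec_zero_of_gram[OF Z v(1,3)])
  have "c \<bullet> v = 0" if c: "c \<in> set (cols Z)" for c
  proof -
    obtain j where j: "j < d" "c = col Z j"
      using c Z by (auto simp: cols_def)
    then have "(transpose_mat Z *\<^sub>v v) $ j = c \<bullet> v"
      using Z by simp
    then show ?thesis
      using Zv j by simp
  qed
  then show False
    using eq_zero_of_orthogonal_cols[OF Z rank v(1)] v(2) by blast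
qed

lemma eq_one_mat_of_mult_full_row_rank:
  fixes M A :: "real mat"
  assumes M: "M \<in> carrier_mat s s" and A: "A \<in> carrier_mat s d"
    and MA: "M * A = A" and det_G: "det (A * transpose_mat A) \<noteq> 0"
  shows "M = 1\<^sub>m s"
proof -
  let ?G = "A * transpose_mat A"
  have G: "?G \<in> carrier_mat s s"
    using A by simp
  note GI = adj_inv[OF G det_G]
  have "M * ?G = M * A * transpose_mat A"
    by (rule mat_mult_assoc[symmetric]) (use M A in auto)
  then have MG: "M * ?G = ?G"
    by (simp only: MA)
  have "M = M * 1\<^sub>m s"
    using M by simp
  also have "\<dots> = M * ?G * adj_inv ?G"
    unfolding GI(2)[symmetric] by (rule mat_mult_assoc[symmetric]) (use M G GI in auto)
  also have "\<dots> = 1\<^sub>m s"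
    unfolding MG by (rule GI(2))
  finally show ?thesis .
qed

text \<open>If the rows of \<open>A\<close> and of \<open>Z\<close> span the same space (\<open>Z = W A\<close>, \<open>A = E Z\<close>) and those of
  \<open>A\<close> are independent, then \<open>Z\<^sup>+ = A\<^sup>T (A A\<^sup>T)\<^sup>-\<^sup>1 (W\<^sup>T W)\<^sup>-\<^sup>1 W\<^sup>T\<close>.\<close>

lemma pinv_mult_self_factorization:
  fixes Z A W E :: "real mat"
  assumes Z: "Z \<in> carrier_mat k d" and A: "A \<in> carrier_mat s d" and W: "W \<in> carrier_mat k s"
    and E: "E \<in> carrier_mat s k" and ZW: "Z = W * A" and AE: "A = E * Z"
    and det_G: "det (A * transpose_mat A) \<noteq> 0"
  shows "pinv Z * Z = transpose_mat A * (adj_inv (A * transpose_mat A) * A)"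
proof -
  define G where "G = A * transpose_mat A"
  define H where "H = transpose_mat W * W"
  have G: "G \<in> carrier_mat s s" "transpose_mat G = G" "det G \<noteq> 0"
    using A det_G by (auto simp: G_def transpose_mat_mult)
  note GI = adj_inv[OF G(1,3)]
  have "E * W * A = A"
    using A W E by (simp add: mat_mult_assoc ZW[symmetric] AE[symmetric])
  then have EW: "E * W = 1\<^sub>m s"
    using E W A det_G by (intro eq_one_mat_of_mult_full_row_rank) auto
  have H: "H \<in> carrier_mat s s" "transpose_mat H = H" "det H \<noteq> 0"
    using W det_gram_nonzero_of_left_inverse[OF W E EW] by (auto simp: H_def transpose_mat_mult)
  note HI = adj_inv[OF H(1,3)]
  define X where "X = transpose_mat A * (adj_inv G * (adj_inv H * transpose_mat W))"
  have dims: "dim_row A = s" "dim_col A = d" "dim_row W = k" "dim_col W = s"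
    "dim_row (adj_inv G) = s" "dim_col (adj_inv G) = s" "dim_row (adj_inv H) = s" "dim_col (adj_inv H) = s"
    using A W GI HI by auto
  have cancel_G: "A * (transpose_mat A * (adj_inv G * R)) = R" if "dim_row R = s" for R
    using dims GI that by (simp add: G_def mat_mult_assoc[symmetric])
  have cancel_H: "adj_inv H * (transpose_mat W * (W * R)) = R" if "dim_row R = s" for R
    using dims HI that by (simp add: H_def mat_mult_assoc[symmetric])
  have XZ: "X * Z = transpose_mat A * (adj_inv G * A)"
    unfolding X_def ZW using dims by (simp add: mat_mult_assoc cancel_H)
  have ZX: "Z * X = W * (adj_inv H * transpose_mat W)"
    unfolding X_def ZW using dims by (simp add: mat_mult_assoc cancel_G)
  have "penrose_conditions Z X"
    unfolding penrose_conditions_def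
  proof (intro conjI)
    show "X \<in> carrier_mat (dim_col Z) (dim_row Z)"
      unfolding X_def using Z dims by auto
    show "Z * X * Z = Z"
      unfolding ZX unfolding ZW using dims by (simp add: mat_mult_assoc cancel_H)
    show "X * Z * X = X"
      unfolding XZ unfolding X_def using dims by (simp add: mat_mult_assoc cancel_G cancel_H)
    show "transpose_mat (Z * X) = Z * X"
      unfolding ZX using dims H by (simp add: transpose_mat_mult mat_mult_assoc transpose_adj_inv)
    show "transpose_mat (X * Z) = X * Z"
      unfolding XZ using dims G by (simp add: transpose_mat_mult mat_mult_assoc transpose_adj_inv)
  qed
  then show ?thesis
    using pinv_eqI[OF Z] XZ by (simp add: G_def)
qed

definition row_submat :: "'a mat \<Rightarrow> nat list \<Rightarrow> 'a mat" where
  "row_submat Z S = mat (length S) (dim_col Z) (\<lambda>(a, j). Z $$ (S ! a, j))"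

definition in_row_span :: "real mat \<Rightarrow> nat list \<Rightarrow> nat \<Rightarrow> bool" where
  "in_row_span Z S r \<longleftrightarrow> (\<exists>c. \<forall>j<dim_col Z. Z $$ (r, j) = (\<Sum>a<length S. c a * Z $$ (S ! a, j)))"

lemma row_submat_carrier_mat: "Z \<in> carrier_mat k d \<Longrightarrow> row_submat Z S \<in> carrier_mat (length S) d"
  unfolding row_submat_def by simp

lemma row_submat_upt: "Z \<in> carrier_mat k d \<Longrightarrow> row_submat Z [0..<k] = Z"
  by (rule eq_matI) (auto simp: row_submat_def)

lemma row_submat_gram:
  assumes Z: "Z \<in> carrier_mat k d" and T: "set T \<subseteq> {..<k}"
  shows "row_submat Z T * transpose_mat (row_submat Z T)
    = mat (length T) (length T) (\<lambda>(x, y). (Z * transpose_mat Z) $$ (T ! x, T ! y))"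
proof (rule eq_matI)
  fix x y assume "x < dim_row (mat (length T) (length T) (\<lambda>(x, y). (Z * transpose_mat Z) $$ (T ! x, T ! y)))"
    "y < dim_col (mat (length T) (length T) (\<lambda>(x, y). (Z * transpose_mat Z) $$ (T ! x, T ! y)))"
  then have x: "x < length T" and y: "y < length T"
    by auto
  have "T ! x < k" "T ! y < k"
    using T x y nth_mem by blast+
  then show "(row_submat Z T * transpose_mat (row_submat Z T)) $$ (x, y)
      = mat (length T) (length T) (\<lambda>(x, y). (Z * transpose_mat Z) $$ (T ! x, T ! y)) $$ (x, y)"
    using x y Z by (simp add: row_submat_def scalar_prod_def)
qed (auto simp: row_submat_def)

lemma in_row_span_nth:
  assumes "a < length S"
  shows "in_row_span Z S (S ! a)"
  unfolding in_row_span_def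
proof (intro exI[of _ "\<lambda>b. if b = a then 1 else 0"] allI impI)
  fix j
  have "(\<Sum>b<length S. (if b = a then 1 else 0) * Z $$ (S ! b, j)) = (\<Sum>b<length S. if b = a then Z $$ (S ! b, j) else 0)"
    by (rule sum.cong) auto
  then show "Z $$ (S ! a, j) = (\<Sum>b<length S. (if b = a then 1 else 0) * Z $$ (S ! b, j))"
    using assms by simp
qed

lemma in_row_span_snoc:
  assumes "in_row_span Z S r"
  shows "in_row_span Z (S @ [i]) r"
proof -
  obtain c where c: "\<forall>j<dim_col Z. Z $$ (r, j) = (\<Sum>a<length S. c a * Z $$ (S ! a, j))"
    using assms unfolding in_row_span_def by blast
  show ?thesis
    unfolding in_row_span_def
  proof (intro exI[of _ "\<lambda>a. if a < length S then c a else 0"] allI impI)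
    fix j assume "j < dim_col Z"
    then show "Z $$ (r, j) = (\<Sum>a<length (S @ [i]). (if a < length S then c a else 0) * Z $$ ((S @ [i]) ! a, j))"
      using c by (simp add: nth_append)
  qed
qed

lemma transpose_mult_vec_zero_imp_zero:
  fixes A :: "real mat"
  assumes A: "A \<in> carrier_mat s d" and "det (A * transpose_mat A) \<noteq> 0"
    and u: "u \<in> carrier_vec s" and "transpose_mat A *\<^sub>v u = 0\<^sub>v d"
  shows "u = 0\<^sub>v s"
proof -
  have "(A * transpose_mat A) *\<^sub>v u = 0\<^sub>v s"
    using assms by auto
  then show ?thesis
    using det_0_iff_vec_prod_zero_field[of "A * transpose_mat A" s] assms by auto
qed

lemma transpose_row_submat_mult_vec_index:
  "v \<in> carrier_vec (length S) \<Longrightarrow> j < dim_col Z \<Longrightarrow>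
     (transpose_mat (row_submat Z S) *\<^sub>v v) $ j = (\<Sum>a<length S. Z $$ (S ! a, j) * v $ a)"
  by (simp add: row_submat_def scalar_prod_def lessThan_atLeast0)

lemma snoc_kernel_last_nonzero:
  fixes Z :: "real mat"
  assumes Z: "Z \<in> carrier_mat k d"
    and det_S: "det (row_submat Z S * transpose_mat (row_submat Z S)) \<noteq> 0"
    and v: "v \<in> carrier_vec (Suc (length S))" "v \<noteq> 0\<^sub>v (Suc (length S))"
    and kernel: "transpose_mat (row_submat Z (S @ [i])) *\<^sub>v v = 0\<^sub>v d"
  shows "v $ length S \<noteq> 0"
proof
  assume v_s: "v $ length S = 0"
  define u where "u = vec (length S) (\<lambda>a. v $ a)"
  have "transpose_mat (row_submat Z S) *\<^sub>v u = 0\<^sub>v d"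
  proof (rule eq_vecI)
    fix j assume "j < dim_vec (0\<^sub>v d :: real vec)"
    then have j: "j < dim_col Z"
      using Z by simp
    have "(transpose_mat (row_submat Z S) *\<^sub>v u) $ j = (transpose_mat (row_submat Z (S @ [i])) *\<^sub>v v) $ j"
      using j v v_s by (simp add: transpose_row_submat_mult_vec_index u_def nth_append)
    then show "(transpose_mat (row_submat Z S) *\<^sub>v u) $ j = 0\<^sub>v d $ j"
      using kernel j Z by simp
  qed (use Z in \<open>simp add: row_submat_def\<close>)
  then have "u = 0\<^sub>v (length S)"
    using transpose_mult_vec_zero_imp_zero[OF row_submat_carrier_mat[OF Z] det_S] by (simp add: u_def)
  then have "v $ a = 0" if "a < Suc (length S)" for a
    using that v_s by (cases "a = length S") (auto simp: u_def dest!: arg_cong[where f = "\<lambda>w. w $ a"])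
  then show False
    using v by (auto intro!: eq_vecI)
qed

text \<open>If the rows \<open>S\<close> have a nonsingular Gram matrix but the rows \<open>S @ [i]\<close> do not, a
  kernel vector of the latter has a nonzero last entry; solving for row \<open>i\<close> expresses it
  through the rows \<open>S\<close>.\<close>

lemma in_row_span_of_det_gram_zero:
  fixes Z :: "real mat"
  assumes Z: "Z \<in> carrier_mat k d"
    and det_S: "det (row_submat Z S * transpose_mat (row_submat Z S)) \<noteq> 0"
    and det_Si: "det (row_submat Z (S @ [i]) * transpose_mat (row_submat Z (S @ [i]))) = 0"
  shows "in_row_span Z S i"
proof -
  let ?s = "length S" and ?B = "row_submat Z (S @ [i])"
  have B: "?B \<in> carrier_mat (Suc ?s) d"
    using row_submat_carrier_mat[OF Z, of "S @ [i]"] by simp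
  obtain v where v: "v \<in> carrier_vec (Suc ?s)" "v \<noteq> 0\<^sub>v (Suc ?s)" "(?B * transpose_mat ?B) *\<^sub>v v = 0\<^sub>v (Suc ?s)"
    using det_0_iff_vec_prod_zero_field[of "?B * transpose_mat ?B" "Suc ?s"] B det_Si by auto
  have kernel: "transpose_mat ?B *\<^sub>v v = 0\<^sub>v d"
    by (rule transpose_mult_vec_zero_of_gram[OF B v(1,3)])
  have last: "v $ ?s \<noteq> 0"
    by (rule snoc_kernel_last_nonzero[OF Z det_S v(1,2) kernel])
  show ?thesis
    unfolding in_row_span_def
  proof (intro exI[of _ "\<lambda>a. - v $ a / v $ ?s"] allI impI)
    fix j assume j: "j < dim_col Z"
    have "(\<Sum>a<Suc ?s. Z $$ ((S @ [i]) ! a, j) * v $ a) = 0"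
      using transpose_row_submat_mult_vec_index[of v "S @ [i]" j Z] v(1) kernel j Z by simp
    then have "(\<Sum>a<?s. v $ a * Z $$ (S ! a, j)) = - v $ ?s * Z $$ (i, j)"
      by (simp add: nth_append mult.commute)
    then show "Z $$ (i, j) = (\<Sum>a<?s. - v $ a / v $ ?s * Z $$ (S ! a, j))"
      using last by (simp add: sum_divide_distrib[symmetric] sum_negf field_simps)
  qed
qed

text \<open>With \<open>A\<close> the rows \<open>S\<close>, the factorization \<open>Z = W A\<close> comes from the row-span
  coefficients and \<open>A = E Z\<close> from the selection matrix \<open>E\<close>.\<close>

lemma pinv_mult_self_row_basis:
  fixes Z :: "real mat"
  assumes Z: "Z \<in> carrier_mat k d" and S: "set S \<subseteq> {..<k}"
    and det_S: "det (row_submat Z S * transpose_mat (row_submat Z S)) \<noteq> 0"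
    and span: "\<forall>r<k. in_row_span Z S r"
  shows "pinv Z * Z = transpose_mat (row_submat Z S) * (adj_inv (row_submat Z S * transpose_mat (row_submat Z S)) * row_submat Z S)"
proof -
  let ?s = "length S" and ?A = "row_submat Z S"
  have A: "?A \<in> carrier_mat ?s d"
    by (rule row_submat_carrier_mat[OF Z])
  have "\<forall>r. \<exists>c. r < k \<longrightarrow> (\<forall>j<d. Z $$ (r, j) = (\<Sum>a<?s. c a * Z $$ (S ! a, j)))"
    using span Z unfolding in_row_span_def by auto
  then obtain c where c: "\<forall>r<k. \<forall>j<d. Z $$ (r, j) = (\<Sum>a<?s. c r a * Z $$ (S ! a, j))"
    by metis
  define W where "W = mat k ?s (\<lambda>(r, a). c r a)"
  define E where "E = mat ?s k (\<lambda>(a, r). if r = S ! a then 1 else (0::real))"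
  have W: "W \<in> carrier_mat k ?s" and E: "E \<in> carrier_mat ?s k"
    by (simp_all add: W_def E_def)
  have "Z = W * ?A"
  proof (rule eq_matI)
    fix r j assume "r < dim_row (W * ?A)" "j < dim_col (W * ?A)"
    then have r: "r < k" and j: "j < d"
      using W A by auto
    then show "Z $$ (r, j) = (W * ?A) $$ (r, j)"
      using c Z by (simp add: scalar_prod_def W_def row_submat_def lessThan_atLeast0)
  qed (use W A Z in auto)
  moreover have "?A = E * Z"
  proof (rule eq_matI)
    fix a j assume "a < dim_row (E * Z)" "j < dim_col (E * Z)"
    then have a: "a < ?s" and j: "j < d"
      using E Z by auto
    have "S ! a < k"
      using S a nth_mem[of a S] by blast
    have "(E * Z) $$ (a, j) = (\<Sum>r\<in>{0..<k}. (if r = S ! a then 1 else 0) * Z $$ (r, j))"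
      using a j E Z by (simp add: scalar_prod_def E_def)
    also have "\<dots> = (\<Sum>r\<in>{0..<k}. if r = S ! a then Z $$ (r, j) else 0)"
      by (rule sum.cong) auto
    also have "\<dots> = Z $$ (S ! a, j)"
      using \<open>S ! a < k\<close> by simp
    finally show "?A $$ (a, j) = (E * Z) $$ (a, j)"
      using a j Z by (simp add: row_submat_def)
  qed (use E Z A in auto)
  ultimately show ?thesis
    by (rule pinv_mult_self_factorization[OF Z A W E _ _ det_S])
qed

section \<open>The projection algorithms\<close>

definition entry_expr :: "nat \<Rightarrow> nat \<Rightarrow> nat \<Rightarrow> expr" where
  "entry_expr d r j = Inp (r * d + j)"

definition gram_expr :: "nat \<Rightarrow> nat \<Rightarrow> nat \<Rightarrow> expr" where
  "gram_expr d a b = sum_expr (map (\<lambda>j. Op GMul (entry_expr d a j) (entry_expr d b j)) [0..<d])"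

definition gram_det_expr :: "nat \<Rightarrow> nat list \<Rightarrow> expr" where
  "gram_det_expr d T = det_expr (gram_expr d) T T"

text \<open>\<open>-D\<^sup>2 \<ge> 0\<close> holds iff \<open>D = 0\<close>, so a single sign test decides whether the rows \<open>T\<close>
  are linearly dependent.\<close>

definition singular_test_expr :: "nat \<Rightarrow> nat list \<Rightarrow> expr" where
  "singular_test_expr d T = Op GSub zero_expr (Op GMul (gram_det_expr d T) (gram_det_expr d T))"

text \<open>Entry \<open>(p, q)\<close> of \<open>A\<^sup>T adj(A A\<^sup>T) A\<close> for the rows \<open>A\<close> listed in \<open>S\<close> is
  \<open>\<Sum>\<^sub>a\<^sub>,\<^sub>b (-1)\<^sup>a\<^sup>+\<^sup>b A\<^sub>a\<^sub>p A\<^sub>b\<^sub>q M\<^sub>b\<^sub>a\<close>, with \<open>M\<^sub>b\<^sub>a\<close> the minor of the Gram matrix; a \<open>1 \<times> 1\<close>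
  Gram matrix has the empty minor \<open>1\<close>, which cannot be written without constants.\<close>

definition adj_term_expr :: "nat \<Rightarrow> nat list \<Rightarrow> nat \<Rightarrow> nat \<Rightarrow> nat \<Rightarrow> nat \<Rightarrow> expr" where
  "adj_term_expr d S p q a b =
     (let t = Op GMul (entry_expr d (S ! a) p) (entry_expr d (S ! b) q)
      in if length S = 1 then t else Op GMul t (det_expr (gram_expr d) (remove_nth b S) (remove_nth a S)))"

definition proj_entry_expr :: "nat \<Rightarrow> nat list \<Rightarrow> nat \<Rightarrow> nat \<Rightarrow> expr" where
  "proj_entry_expr d S p q = (if S = [] then zero_expr else
     Op GDiv (sum_expr [signed_sum_expr [(even (a + b), adj_term_expr d S p q a b). b \<leftarrow> [0..<length S]].
                a \<leftarrow> [0..<length S]])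
       (gram_det_expr d S))"

definition proj_exprs :: "nat \<Rightarrow> nat list \<Rightarrow> expr list" where
  "proj_exprs d S = [proj_entry_expr d S p q. p \<leftarrow> [0..<d], q \<leftarrow> [0..<d]]"

lemma mat_of_input_carrier_mat: "mat_of_input k d xs \<in> carrier_mat k d"
  by (simp add: mat_of_input_def)

lemma eval_gram_expr:
  assumes "a < k" "b < k"
  shows "eval_expr xs (gram_expr d a b) = (mat_of_input k d xs * transpose_mat (mat_of_input k d xs)) $$ (a, b)"
  using assms
  by (simp add: gram_expr_def entry_expr_def eval_sum_expr comp_def mat_of_input_def scalar_prod_def
      interv_sum_list_conv_sum_set_nat)

lemma eval_det_gram_expr:
  assumes T: "set T \<subseteq> {..<k}" "set T' \<subseteq> {..<k}" "T \<noteq> []" "length T' = length T"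
  shows "eval_expr xs (det_expr (gram_expr d) T T')
    = det (mat (length T) (length T) (\<lambda>(x, y). (mat_of_input k d xs * transpose_mat (mat_of_input k d xs)) $$ (T ! x, T' ! y)))"
proof -
  let ?G = "mat_of_input k d xs * transpose_mat (mat_of_input k d xs)"
  have "mat (length T) (length T) (\<lambda>(x, y). eval_expr xs (gram_expr d (T ! x) (T' ! y)))
      = mat (length T) (length T) (\<lambda>(x, y). ?G $$ (T ! x, T' ! y))"
  proof (rule eq_matI)
    fix x y assume "x < dim_row (mat (length T) (length T) (\<lambda>(x, y). ?G $$ (T ! x, T' ! y)))"
      "y < dim_col (mat (length T) (length T) (\<lambda>(x, y). ?G $$ (T ! x, T' ! y)))"
    then have "T ! x < k" "T' ! y < k"
      using T nth_mem by (metis dim_row_mat(1) dim_col_mat(1) lessThan_iff subsetD)+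
    then show "mat (length T) (length T) (\<lambda>(x, y). eval_expr xs (gram_expr d (T ! x) (T' ! y))) $$ (x, y)
        = mat (length T) (length T) (\<lambda>(x, y). ?G $$ (T ! x, T' ! y)) $$ (x, y)"
      using \<open>x < _\<close> \<open>y < _\<close> by (simp add: eval_gram_expr)
  qed auto
  then show ?thesis
    using T by (simp add: eval_det_expr)
qed

lemma eval_gram_det_expr:
  assumes "set T \<subseteq> {..<k}" "T \<noteq> []"
  shows "eval_expr xs (gram_det_expr d T)
    = det (row_submat (mat_of_input k d xs) T * transpose_mat (row_submat (mat_of_input k d xs) T))"
  using assms eval_det_gram_expr[of T k T xs d]
  by (simp add: gram_det_expr_def row_submat_gram[OF mat_of_input_carrier_mat])

lemma det_gram_minor:
  fixes xs :: "real list" and d :: nat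
  assumes S: "set S \<subseteq> {..<k}" and ab: "a < length S" "b < length S"
  defines "Z \<equiv> mat_of_input k d xs"
  shows "det (mat_delete (row_submat Z S * transpose_mat (row_submat Z S)) b a)
    = (if length S = 1 then 1 else eval_expr xs (det_expr (gram_expr d) (remove_nth b S) (remove_nth a S)))"
proof -
  have minor: "mat_delete (row_submat Z S * transpose_mat (row_submat Z S)) b a
      = mat (length S - 1) (length S - 1)
          (\<lambda>(x, y). (Z * transpose_mat Z) $$ (remove_nth b S ! x, remove_nth a S ! y))"
    unfolding row_submat_gram[OF mat_of_input_carrier_mat S, of d xs, folded Z_def]
    by (rule eq_matI) (use ab in \<open>auto simp: mat_delete_def nth_remove_nth\<close>)
  show ?thesis
  proof (cases "length S = 1")
    case True
    then show ?thesis
      unfolding minor by (simp add: det_dim_zero)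
  next
    case False
    then have "length (remove_nth b S) \<noteq> 0"
      using ab by simp
    then have "remove_nth b S \<noteq> []"
      by auto
    moreover have "set (remove_nth b S) \<subseteq> {..<k}" "set (remove_nth a S) \<subseteq> {..<k}"
      using set_remove_nth_subset S by (rule order_trans)+
    ultimately show ?thesis
      unfolding minor using False ab by (simp add: eval_det_gram_expr Z_def)
  qed
qed

lemma eval_adj_term_expr:
  fixes xs :: "real list" and d :: nat
  assumes S: "set S \<subseteq> {..<k}" and ab: "a < length S" "b < length S" and p: "p < d" and q: "q < d"
  defines "A \<equiv> row_submat (mat_of_input k d xs) S"
  shows "eval_expr xs (adj_term_expr d S p q a b) = A $$ (a, p) * A $$ (b, q) * det (mat_delete (A * transpose_mat A) b a)"
proof -
  have "S ! a < k" "S ! b < k"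
    using S nth_mem[OF ab(1)] nth_mem[OF ab(2)] by (meson lessThan_iff subsetD)+
  then show ?thesis
    using ab p q det_gram_minor[OF S ab, of d xs]
    by (simp add: adj_term_expr_def A_def Let_def entry_expr_def row_submat_def mat_of_input_def)
qed

lemma eval_proj_entry_expr:
  fixes xs :: "real list" and d :: nat
  assumes S: "set S \<subseteq> {..<k}" and p: "p < d" and q: "q < d"
  defines "A \<equiv> row_submat (mat_of_input k d xs) S"
  assumes det_S: "det (A * transpose_mat A) \<noteq> 0"
  shows "eval_expr xs (proj_entry_expr d S p q) = (transpose_mat A * (adj_inv (A * transpose_mat A) * A)) $$ (p, q)"
proof -
  let ?s = "length S" and ?G = "A * transpose_mat A"
  let ?t = "\<lambda>a b. A $$ (a, p) * A $$ (b, q) * det (mat_delete ?G b a)"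
  have A: "A \<in> carrier_mat ?s d"
    unfolding A_def by (rule row_submat_carrier_mat[OF mat_of_input_carrier_mat])
  then have G: "?G \<in> carrier_mat ?s ?s"
    by simp
  have adj: "adj_inv ?G $$ (a, b) = (-1) ^ (a + b) * det (mat_delete ?G b a) / det ?G"
    if "a < ?s" "b < ?s" for a b
    using that A by (simp add: adj_inv_def adj_mat_def cofactor_def add.commute)
  have "(transpose_mat A * (adj_inv ?G * A)) $$ (p, q)
      = (\<Sum>a<?s. A $$ (a, p) * (\<Sum>b<?s. adj_inv ?G $$ (a, b) * A $$ (b, q)))"
    using A G p q adj_inv(1)[OF G det_S] by (simp add: scalar_prod_def lessThan_atLeast0)
  also have "\<dots> = (\<Sum>a<?s. \<Sum>b<?s. (if even (a + b) then ?t a b else - ?t a b) / det ?G)"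
    by (auto simp: sum_distrib_left adj minus_one_power_iff intro!: sum.cong)
  also have "\<dots> = eval_expr xs (proj_entry_expr d S p q)"
  proof (cases "S = []")
    case False
    then have "eval_expr xs (gram_det_expr d S) = det ?G"
      using S by (simp add: eval_gram_det_expr A_def)
    then show ?thesis
      using False S p q
      by (simp add: proj_entry_expr_def eval_sum_expr eval_signed_sum_expr eval_adj_term_expr A_def
          comp_def interv_sum_list_conv_sum_set_nat lessThan_atLeast0 sum_divide_distrib cong: if_cong)
  qed (simp add: proj_entry_expr_def)
  finally show ?thesis ..
qed

lemma input_index_less:
  assumes "r < k" "j < d"
  shows "r * d + j < k * (d::nat)"
proof -
  have "r * d + j < Suc r * d"
    using assms(2) by simp
  also have "\<dots> \<le> k * d"
    using assms(1) by (intro mult_right_mono) auto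
  finally show ?thesis .
qed

lemma expr_vars_gram_expr: "a < k \<Longrightarrow> b < k \<Longrightarrow> 0 < d \<Longrightarrow> expr_vars (gram_expr d a b) \<subseteq> {..<k * d}"
  unfolding gram_expr_def sum_expr_def
  by (intro expr_vars_signed_sum_expr) (auto simp: entry_expr_def input_index_less)

lemma expr_degree_gram_expr: "expr_degree (gram_expr d a b) \<le> 2"
  unfolding gram_expr_def sum_expr_def
  by (intro expr_degree_signed_sum_expr_le) (auto simp: entry_expr_def)

lemma div_free_gram_expr: "div_free (gram_expr d a b)"
  unfolding gram_expr_def sum_expr_def
  by (intro div_free_signed_sum_expr) (auto simp: entry_expr_def)

lemma expr_vars_det_gram_expr:
  assumes "set T \<subseteq> {..<k}" "set T' \<subseteq> {..<k}" "length T' = length T" "0 < d" "T \<noteq> []"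
  shows "expr_vars (det_expr (gram_expr d) T T') \<subseteq> {..<k * d}"
proof (rule expr_vars_det_expr)
  show "(\<Union>a\<in>set T. \<Union>b\<in>set T'. expr_vars (gram_expr d a b)) \<subseteq> {..<k * d}"
    using assms by (intro UN_least expr_vars_gram_expr) auto
  have "0 < k"
    using assms(1,5) by (cases T) auto
  then show "0 < k * d"
    using assms(4) by simp
qed (use assms in simp)

lemma bounded_quotient_singular_test_expr:
  assumes "T \<noteq> []" "4 * length T \<le> B"
  shows "bounded_quotient B (singular_test_expr d T)"
proof -
  have "expr_degree (gram_det_expr d T) \<le> 2 * length T"
    unfolding gram_det_expr_def using assms(1) expr_degree_gram_expr by (intro expr_degree_det_expr_le) auto
  moreover have "1 \<le> length T"
    using assms(1) by (cases T) auto
  ultimately show ?thesis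
    using assms by (auto simp: bounded_quotient_def singular_test_expr_def gram_det_expr_def
        div_free_det_expr div_free_gram_expr)
qed

lemma expr_vars_singular_test_expr:
  assumes "set T \<subseteq> {..<k}" "0 < d" "T \<noteq> []"
  shows "expr_vars (singular_test_expr d T) \<subseteq> {..<k * d}"
proof -
  have "0 < k"
    using assms(1,3) by (cases T) auto
  then show ?thesis
    using expr_vars_det_gram_expr[of T k T d] assms
    by (auto simp: singular_test_expr_def gram_det_expr_def)
qed

lemma adj_term_expr_bounds:
  assumes S: "set S \<subseteq> {..<k}" and ab: "a < length S" "b < length S" and p: "p < d" and q: "q < d"
  shows "expr_degree (adj_term_expr d S p q a b) \<le> 2 * length S" "div_free (adj_term_expr d S p q a b)"
    "expr_vars (adj_term_expr d S p q a b) \<subseteq> {..<k * d}"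
proof -
  have "S ! a < k" "S ! b < k"
    using S nth_mem[OF ab(1)] nth_mem[OF ab(2)] by (meson lessThan_iff subsetD)+
  then have entries: "expr_vars (Op GMul (entry_expr d (S ! a) p) (entry_expr d (S ! b) q)) \<subseteq> {..<k * d}"
    using p q by (simp add: entry_expr_def input_index_less)
  have "expr_degree (adj_term_expr d S p q a b) \<le> 2 * length S \<and> div_free (adj_term_expr d S p q a b) \<and>
    expr_vars (adj_term_expr d S p q a b) \<subseteq> {..<k * d}"
  proof (cases "length S = 1")
    case True
    then show ?thesis
      using entries by (simp add: adj_term_expr_def entry_expr_def)
  next
    case False
    let ?M = "det_expr (gram_expr d) (remove_nth b S) (remove_nth a S)"
    have len: "length (remove_nth b S) = length S - 1" "length (remove_nth a S) = length S - 1"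
      using ab by simp_all
    moreover have "length S - 1 \<noteq> 0"
      using ab False by linarith
    ultimately have nonempty: "remove_nth b S \<noteq> []"
      by (metis length_0_conv)
    have "expr_degree ?M \<le> 2 * (length S - 1)"
      using len nonempty expr_degree_det_expr_le[of "gram_expr d" 2 "remove_nth b S"] expr_degree_gram_expr
      by simp
    moreover have "set (remove_nth b S) \<subseteq> {..<k}" "set (remove_nth a S) \<subseteq> {..<k}"
      using set_remove_nth_subset S by (rule order_trans)+
    then have "expr_vars ?M \<subseteq> {..<k * d}"
      using len nonempty p by (intro expr_vars_det_gram_expr) auto
    ultimately show ?thesis
      using False ab entries by (auto simp: adj_term_expr_def entry_expr_def Let_def div_free_det_expr div_free_gram_expr)
  qed
  then show "expr_degree (adj_term_expr d S p q a b) \<le> 2 * length S" "div_free (adj_term_expr d S p q a b)"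
    "expr_vars (adj_term_expr d S p q a b) \<subseteq> {..<k * d}"
    by simp_all
qed

lemma proj_entry_expr_bounds:
  assumes S: "set S \<subseteq> {..<k}" and p: "p < d" and q: "q < d" and "0 < k"
    and B: "2 * length S \<le> B" "1 \<le> B"
  shows "bounded_quotient B (proj_entry_expr d S p q)" "expr_vars (proj_entry_expr d S p q) \<subseteq> {..<k * d}"
proof -
  have kd: "0 < k * d"
    using p \<open>0 < k\<close> by simp
  have "bounded_quotient B (proj_entry_expr d S p q) \<and> expr_vars (proj_entry_expr d S p q) \<subseteq> {..<k * d}"
  proof (cases "S = []")
    case True
    then show ?thesis
      using B kd by (simp add: proj_entry_expr_def bounded_quotient_def)
  next
    case False
    let ?num = "sum_expr [signed_sum_expr [(even (a + b), adj_term_expr d S p q a b). b \<leftarrow> [0..<length S]].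
                a \<leftarrow> [0..<length S]]"
    note adj = adj_term_expr_bounds[OF S _ _ p q]
    let ?row = "\<lambda>a. signed_sum_expr [(even (a + b), adj_term_expr d S p q a b). b \<leftarrow> [0..<length S]]"
    have one: "1 \<le> 2 * length S"
      using False by (cases S) auto
    have row: "expr_degree (?row a) \<le> 2 * length S" "div_free (?row a)" "expr_vars (?row a) \<subseteq> {..<k * d}"
      if "a < length S" for a
      using adj[OF that] one kd
      by (intro expr_degree_signed_sum_expr_le div_free_signed_sum_expr expr_vars_signed_sum_expr; auto)+
    have "expr_degree ?num \<le> 2 * length S" "div_free ?num" "expr_vars ?num \<subseteq> {..<k * d}"
      using row one kd unfolding sum_expr_def
      by (intro expr_degree_signed_sum_expr_le div_free_signed_sum_expr expr_vars_signed_sum_expr; auto)+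
    moreover have "expr_degree (gram_det_expr d S) \<le> 2 * length S"
      unfolding gram_det_expr_def using False expr_degree_gram_expr by (intro expr_degree_det_expr_le) auto
    moreover have "div_free (gram_det_expr d S)"
      unfolding gram_det_expr_def by (simp add: div_free_det_expr div_free_gram_expr)
    moreover have "expr_vars (gram_det_expr d S) \<subseteq> {..<k * d}"
      unfolding gram_det_expr_def using False S p by (intro expr_vars_det_gram_expr) auto
    ultimately show ?thesis
      using False B by (auto simp: proj_entry_expr_def bounded_quotient_def)
  qed
  then show "bounded_quotient B (proj_entry_expr d S p q)" "expr_vars (proj_entry_expr d S p q) \<subseteq> {..<k * d}"
    by simp_all
qed

definition proj_program :: "nat \<Rightarrow> nat list \<Rightarrow> nat \<Rightarrow> gj" where
  "proj_program d S m = output_program (proj_exprs d S) m"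

lemma set_proj_exprs: "set (proj_exprs d S) = {proj_entry_expr d S p q | p q. p < d \<and> q < d}"
  by (auto simp: proj_exprs_def; blast)

lemma proj_exprs_bounds:
  assumes "set S \<subseteq> {..<k}" "0 < k" "0 < d" "2 * length S \<le> B" "1 \<le> B"
  shows "\<forall>e\<in>set (proj_exprs d S). bounded_quotient B e" "(\<Union>e\<in>set (proj_exprs d S). expr_vars e) \<subseteq> {..<k * d}"
proof -
  have "bounded_quotient B e \<and> expr_vars e \<subseteq> {..<k * d}" if e: "e \<in> set (proj_exprs d S)" for e
  proof -
    obtain p q where "p < d" "q < d" "e = proj_entry_expr d S p q"
      using e unfolding set_proj_exprs by auto
    then show ?thesis
      using proj_entry_expr_bounds[OF assms(1) _ _ assms(2,4,5)] by simp
  qed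
  then show "\<forall>e\<in>set (proj_exprs d S). bounded_quotient B e"
    "(\<Union>e\<in>set (proj_exprs d S). expr_vars e) \<subseteq> {..<k * d}"
    by auto
qed

lemma gj_wf_proj_program:
  "set S \<subseteq> {..<k} \<Longrightarrow> 0 < k \<Longrightarrow> 0 < d \<Longrightarrow> k * d \<le> m \<Longrightarrow> gj_wf (proj_program d S m) m"
  unfolding proj_program_def
  using proj_exprs_bounds(2)[of S k d "2 * length S + 1"] by (intro gj_wf_output_program) auto

lemma expr_defined_at_proj_exprs:
  fixes xs :: "real list"
  assumes S: "set S \<subseteq> {..<k}" and kd: "0 < k" "0 < d"
    and det_S: "det (row_submat (mat_of_input k d xs) S * transpose_mat (row_submat (mat_of_input k d xs) S)) \<noteq> 0"
    and e: "e \<in> set (proj_exprs d S)"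
  shows "expr_defined_at xs e"
  unfolding expr_defined_at_def
proof (intro allI impI)
  fix a b assume "Op GDiv a b \<in> set (expr_ops e)"
  then have "e = Op GDiv a b"
    using proj_exprs_bounds(1)[OF S kd le_add1 le_add2] e bounded_quotient_division by blast
  then have "S \<noteq> []" "b = gram_det_expr d S"
    using e by (auto simp: proj_exprs_def proj_entry_expr_def zero_expr_def split: if_splits)
  then show "eval_expr xs b \<noteq> 0"
    using det_S S by (simp add: eval_gram_det_expr)
qed

lemma map_eval_proj_exprs:
  fixes xs :: "real list" and d :: nat
  assumes S: "set S \<subseteq> {..<k}"
  defines "Z \<equiv> mat_of_input k d xs"
  assumes det_S: "det (row_submat Z S * transpose_mat (row_submat Z S)) \<noteq> 0"
    and span: "\<forall>r<k. in_row_span Z S r"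
  shows "map (eval_expr xs) (proj_exprs d S) = mat_entries (pinv Z * Z)"
proof -
  let ?A = "row_submat Z S"
  have A: "?A \<in> carrier_mat (length S) d"
    unfolding Z_def by (rule row_submat_carrier_mat[OF mat_of_input_carrier_mat])
  have proj: "pinv Z * Z = transpose_mat ?A * (adj_inv (?A * transpose_mat ?A) * ?A)"
    unfolding Z_def by (rule pinv_mult_self_row_basis[OF mat_of_input_carrier_mat S det_S[unfolded Z_def]
        span[unfolded Z_def]])
  have "pinv Z * Z \<in> carrier_mat d d"
    unfolding proj using A adj_inv(1)[of "?A * transpose_mat ?A" "length S"] det_S by auto
  then have "mat_entries (pinv Z * Z) = [(pinv Z * Z) $$ (p, q). p \<leftarrow> [0..<d], q \<leftarrow> [0..<d]]"
    unfolding mat_entries_def by (metis carrier_matD)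
  also have "\<dots> = map (eval_expr xs) (proj_exprs d S)"
    using eval_proj_entry_expr[OF S _ _ det_S[unfolded Z_def]]
    unfolding proj unfolding Z_def proj_exprs_def map_concat map_map comp_def
    by (intro arg_cong[where f = concat] map_cong refl) auto
  finally show ?thesis ..
qed

lemma gj_exec_proj_program:
  fixes xs :: "real list"
  assumes xs: "length xs = k * d" and kd: "0 < k" "0 < d" and S: "set S \<subseteq> {..<k}"
  defines "Z \<equiv> mat_of_input k d xs"
  assumes det_S: "det (row_submat Z S * transpose_mat (row_submat Z S)) \<noteq> 0"
    and span: "\<forall>r<k. in_row_span Z S r"
  shows "gj_exec (proj_program d S (length (xs @ ys))) (xs @ ys) = Some (mat_entries (pinv Z * Z))"
proof -
  have vars: "(\<Union>e\<in>set (proj_exprs d S). expr_vars e) \<subseteq> {..<length xs}"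
    using proj_exprs_bounds(2)[OF S kd le_add1 le_add2] xs by simp
  then have "(\<Union>e\<in>set (proj_exprs d S). expr_vars e) \<subseteq> {..<length (xs @ ys)}"
    by auto
  moreover have "\<forall>e\<in>set (proj_exprs d S). expr_defined_at (xs @ ys) e"
  proof
    fix e assume e: "e \<in> set (proj_exprs d S)"
    then have "expr_vars e \<subseteq> {..<length xs}"
      using vars by auto
    then show "expr_defined_at (xs @ ys) e"
      using expr_defined_at_proj_exprs[OF S kd det_S[unfolded Z_def] e] by (simp add: expr_defined_at_append)
  qed
  ultimately have "gj_exec (output_program (proj_exprs d S) (length (xs @ ys))) (xs @ ys)
      = Some (map (eval_expr (xs @ ys)) (proj_exprs d S))"
    by (rule gj_exec_output_program)
  then show ?thesis
    using map_eval_expr_append[OF vars] map_eval_proj_exprs[OF S det_S[unfolded Z_def] span[unfolded Z_def]]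
    by (simp add: proj_program_def Z_def)
qed

lemma gj_sym_proj_program:
  assumes "set S \<subseteq> {..<k}" "length S \<le> k" "0 < k" "0 < d" "length (gj_inputs (k * d) @ ys) = m"
  shows "\<forall>v\<in>gj_sym_vals (proj_program d S m) (gj_inputs (k * d) @ ys). ratfun_deg v \<le> 2 * k"
    and "gj_sym_preds (proj_program d S m) (gj_inputs (k * d) @ ys) = {}"
proof -
  note props = proj_exprs_bounds[OF assms(1,3,4), of "2 * k"]
  have vars: "(\<Union>e\<in>set (proj_exprs d S). expr_vars e) \<subseteq> {..<length (gj_inputs (k * d))}"
    using props(2) assms(2,3) by simp
  have deg: "ratfun_deg (eval_expr (gj_inputs (k * d)) e') \<le> 2 * k"
    if "e \<in> set (proj_exprs d S)" "e' \<in> set (expr_ops e)" for e e'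
    using props assms(2,3) that vars by (intro ratfun_deg_ops_bounded_quotient) auto
  have eval: "eval_expr (gj_inputs (k * d) @ ys) e' = eval_expr (gj_inputs (k * d)) e'"
    if "e \<in> set (proj_exprs d S)" "e' \<in> set (expr_ops e)" for e e'
    using that vars expr_vars_ops by (intro eval_expr_append) blast
  have "(\<Union>e\<in>set (proj_exprs d S). expr_vars e) \<subseteq> {..<length (gj_inputs (k * d) @ ys)}"
    using vars by auto
  then have "gj_sym_vals (proj_program d S m) (gj_inputs (k * d) @ ys)
      = eval_expr (gj_inputs (k * d) @ ys) ` (\<Union>e\<in>set (proj_exprs d S). set (expr_ops e))"
    unfolding proj_program_def assms(5)[symmetric] by (rule gj_sym_vals_output_program)
  then show "\<forall>v\<in>gj_sym_vals (proj_program d S m) (gj_inputs (k * d) @ ys). ratfun_deg v \<le> 2 * k"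
    using deg eval by auto
  show "gj_sym_preds (proj_program d S m) (gj_inputs (k * d) @ ys) = {}"
    by (simp add: proj_program_def gj_sym_preds_output_program)
qed

section \<open>Greedy selection of a row basis\<close>

text \<open>Rows \<open>0, \<dots>, i - 1\<close> have been processed and \<open>S\<close> lists those kept so far; row \<open>i\<close> is
  kept iff it is independent of them, i.e. iff the Gram determinant of \<open>S @ [i]\<close> is nonzero.
  \<open>m\<close> is the number of values available.\<close>

function greedy_program :: "nat \<Rightarrow> nat \<Rightarrow> nat \<Rightarrow> nat list \<Rightarrow> nat \<Rightarrow> gj" where
  "greedy_program k d i S m = (if i < k then
     (let e = singular_test_expr d (S @ [i]); m' = m + length (expr_ops e)
      in test_program e (greedy_program k d (Suc i) S m') (greedy_program k d (Suc i) (S @ [i]) m') m)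
   else proj_program d S m)"
  by pat_completeness auto
termination
  by (relation "measure (\<lambda>(k, d, i, S, m). k - i)") auto

declare greedy_program.simps [simp del]

lemma greedy_program_step:
  "i < k \<Longrightarrow> greedy_program k d i S m =
     test_program (singular_test_expr d (S @ [i]))
       (greedy_program k d (Suc i) S (m + length (expr_ops (singular_test_expr d (S @ [i])))))
       (greedy_program k d (Suc i) (S @ [i]) (m + length (expr_ops (singular_test_expr d (S @ [i]))))) m"
  by (simp add: greedy_program.simps Let_def)

lemma greedy_program_final: "\<not> i < k \<Longrightarrow> greedy_program k d i S m = proj_program d S m"
  by (simp add: greedy_program.simps)

lemma length_le_of_strict_sorted: "sorted_wrt (<) S \<Longrightarrow> set S \<subseteq> {..<k} \<Longrightarrow> length S \<le> k"
  by (metis card_lessThan card_mono distinct_card finite_lessThan strict_sorted_iff)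

lemma sorted_snoc_less:
  "sorted_wrt (<) S \<Longrightarrow> set S \<subseteq> {..<i} \<Longrightarrow> sorted_wrt (<) (S @ [i]) \<and> set (S @ [i]) \<subseteq> {..<Suc i}"
  by (auto simp: sorted_wrt_append)

lemma gj_wf_greedy_program:
  "k * d \<le> m \<Longrightarrow> sorted_wrt (<) S \<Longrightarrow> set S \<subseteq> {..<i} \<Longrightarrow> i \<le> k \<Longrightarrow> 0 < k \<Longrightarrow> 0 < d \<Longrightarrow>
     gj_wf (greedy_program k d i S m) m"
proof (induction k d i S m rule: greedy_program.induct)
  case (1 k d i S m)
  show ?case
  proof (cases "i < k")
    case True
    let ?e = "singular_test_expr d (S @ [i])"
    have "set (S @ [i]) \<subseteq> {..<k}"
      using "1.prems" True by auto
    then have "expr_vars ?e \<subseteq> {..<m}"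
      using expr_vars_singular_test_expr[of "S @ [i]" k d] "1.prems" by auto
    moreover have "set S \<subseteq> {..<Suc i}"
      using "1.prems"(3) by auto
    then have "gj_wf (greedy_program k d (Suc i) S (m + length (expr_ops ?e))) (m + length (expr_ops ?e))"
      using "1.IH"(1)[OF True refl refl] "1.prems" True by auto
    moreover have "gj_wf (greedy_program k d (Suc i) (S @ [i]) (m + length (expr_ops ?e))) (m + length (expr_ops ?e))"
      using "1.IH"(2)[OF True refl refl] "1.prems" True sorted_snoc_less[of S i] by auto
    ultimately show ?thesis
      using True by (simp add: greedy_program_step gj_wf_test_program)
  next
    case False
    then show ?thesis
      using "1.prems" by (simp add: greedy_program_final gj_wf_proj_program)
  qed
qed

lemma eval_singular_test_expr:
  "set T \<subseteq> {..<k} \<Longrightarrow> T \<noteq> [] \<Longrightarrow>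
     eval_expr xs (singular_test_expr d T)
       = - (det (row_submat (mat_of_input k d xs) T * transpose_mat (row_submat (mat_of_input k d xs) T)))\<^sup>2"
  by (simp add: singular_test_expr_def eval_gram_det_expr power2_eq_square)

lemma div_free_singular_test_expr: "div_free (singular_test_expr d T)"
  by (simp add: singular_test_expr_def gram_det_expr_def div_free_det_expr div_free_gram_expr)

lemma gj_exec_greedy_program_step:
  fixes xs ys :: "real list" and d :: nat
  assumes xs: "length xs = k * d" "0 < d" and i: "i < k" and T: "set (S @ [i]) \<subseteq> {..<k}"
  defines "e \<equiv> singular_test_expr d (S @ [i])"
  defines "vs \<equiv> xs @ ys @ map (eval_expr (xs @ ys)) (expr_ops e)"
    and "m' \<equiv> length (xs @ ys) + length (expr_ops e)"
    and "D \<equiv> det (row_submat (mat_of_input k d xs) (S @ [i]) * transpose_mat (row_submat (mat_of_input k d xs) (S @ [i])))"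
  shows "gj_exec (greedy_program k d i S (length (xs @ ys))) (xs @ ys) =
    (if D = 0 then gj_exec (greedy_program k d (Suc i) S m') vs
     else gj_exec (greedy_program k d (Suc i) (S @ [i]) m') vs)"
proof -
  have vars: "expr_vars e \<subseteq> {..<length xs}"
    using expr_vars_singular_test_expr[OF T xs(2)] xs(1) by (simp add: e_def)
  then have "expr_vars e \<subseteq> {..<length (xs @ ys)}"
    by auto
  then have "gj_exec (greedy_program k d i S (length (xs @ ys))) (xs @ ys) =
      (if eval_expr (xs @ ys) e \<ge> 0 then gj_exec (greedy_program k d (Suc i) S m') vs
       else gj_exec (greedy_program k d (Suc i) (S @ [i]) m') vs)"
    using gj_exec_test_program[of e "xs @ ys"]
    by (simp add: greedy_program_step[OF i] expr_defined_at_div_free div_free_singular_test_expr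
        e_def vs_def m'_def)
  also have "eval_expr (xs @ ys) e = - D\<^sup>2"
    using eval_expr_append[OF vars] eval_singular_test_expr[OF T] by (simp add: e_def D_def)
  finally show ?thesis
    by simp
qed

lemma gj_exec_greedy_program:
  fixes xs :: "real list"
  assumes xs: "length xs = k * d" and kd: "0 < k" "0 < d"
  defines "Z \<equiv> mat_of_input k d xs"
  shows "length (xs @ ys) = m \<Longrightarrow> sorted_wrt (<) S \<Longrightarrow> set S \<subseteq> {..<i} \<Longrightarrow> i \<le> k \<Longrightarrow>
    det (row_submat Z S * transpose_mat (row_submat Z S)) \<noteq> 0 \<Longrightarrow> \<forall>r<i. in_row_span Z S r \<Longrightarrow>
    gj_exec (greedy_program k d i S m) (xs @ ys) = Some (mat_entries (pinv Z * Z))"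
proof (induction "k - i" arbitrary: i S m ys)
  case 0
  then have "i = k" "set S \<subseteq> {..<k}" "m = length (xs @ ys)"
    by auto
  then show ?case
    using 0 gj_exec_proj_program[OF xs kd, of S ys] by (simp add: greedy_program_final Z_def)
next
  case (Suc n)
  let ?T = "S @ [i]"
  let ?e = "singular_test_expr d ?T"
  let ?zs = "map (eval_expr (xs @ ys)) (expr_ops ?e)"
  have i: "i < k"
    using Suc.hyps(2) by simp
  have T: "sorted_wrt (<) ?T" "set ?T \<subseteq> {..<Suc i}"
    using sorted_snoc_less[OF Suc.prems(2,3)] by auto
  then have "set ?T \<subseteq> {..<k}"
    using i by auto
  note step = gj_exec_greedy_program_step[OF xs kd(2) i this, of ys, folded Z_def, unfolded Suc.prems(1)]
  have m': "length (xs @ (ys @ ?zs)) = m + length (expr_ops ?e)"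
    using Suc.prems(1) by simp
  show ?case
  proof (cases "det (row_submat Z ?T * transpose_mat (row_submat Z ?T)) = 0")
    case True
    have "in_row_span Z S i"
      using in_row_span_of_det_gram_zero[OF mat_of_input_carrier_mat Suc.prems(5)[unfolded Z_def]] True
      by (simp add: Z_def)
    then have "\<forall>r<Suc i. in_row_span Z S r"
      using Suc.prems(6) less_Suc_eq by auto
    moreover have "set S \<subseteq> {..<Suc i}"
      using Suc.prems(3) by auto
    ultimately have "gj_exec (greedy_program k d (Suc i) S (m + length (expr_ops ?e))) (xs @ (ys @ ?zs))
        = Some (mat_entries (pinv Z * Z))"
      by (intro Suc.hyps(1)) (use Suc.hyps(2) Suc.prems m' i in simp_all)
    then show ?thesis
      using step True by simp
  next
    case False
    have "\<forall>r<Suc i. in_row_span Z ?T r"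
      using Suc.prems(6) in_row_span_snoc in_row_span_nth[of "length S" ?T Z] less_Suc_eq by auto
    then have "gj_exec (greedy_program k d (Suc i) ?T (m + length (expr_ops ?e))) (xs @ (ys @ ?zs))
        = Some (mat_entries (pinv Z * Z))"
      by (intro Suc.hyps(1)) (use Suc.hyps(2) Suc.prems m' i T False in simp_all)
    then show ?thesis
      using step False by simp
  qed
qed

text \<open>The greedy algorithm only tests the singularity of row sets \<open>T \<subseteq> {0, \<dots>, k - 1}\<close>,
  each listed increasingly; this is what bounds its predicate complexity by \<open>2\<^sup>k\<close>.\<close>

definition greedy_tests :: "nat \<Rightarrow> nat \<Rightarrow> ratfun set" where
  "greedy_tests k d = (\<lambda>T. eval_expr (gj_inputs (k * d)) (singular_test_expr d (sorted_list_of_set T))) ` Pow {..<k}"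

lemma card_greedy_tests: "card (greedy_tests k d) \<le> 2 ^ k"
  unfolding greedy_tests_def using card_image_le[of "Pow {..<k}"] by (simp add: card_Pow)

lemma finite_greedy_tests: "finite (greedy_tests k d)"
  by (simp add: greedy_tests_def)

lemma singular_test_expr_in_greedy_tests:
  assumes "sorted_wrt (<) T" "set T \<subseteq> {..<k}"
  shows "eval_expr (gj_inputs (k * d)) (singular_test_expr d T) \<in> greedy_tests k d"
proof -
  have "sorted_list_of_set (set T) = T"
    using assms(1) sorted_list_of_set.idem_if_sorted_distinct strict_sorted_iff by blast
  then show ?thesis
    unfolding greedy_tests_def using assms(2) by (metis Pow_iff image_eqI)
qed

lemma ratfun_deg_singular_test_expr_ops:
  assumes "sorted_wrt (<) T" "set T \<subseteq> {..<k}" "T \<noteq> []" "0 < d"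
    and "e' \<in> set (expr_ops (singular_test_expr d T))"
  shows "ratfun_deg (eval_expr (gj_inputs (k * d)) e') \<le> 4 * k"
proof -
  have "length T \<le> k"
    using length_le_of_strict_sorted assms(1,2) by blast
  then have "bounded_quotient (4 * k) (singular_test_expr d T)"
    using assms(3) by (intro bounded_quotient_singular_test_expr) auto
  then show ?thesis
    using ratfun_deg_ops_bounded_quotient expr_vars_singular_test_expr[OF assms(2,4,3)] assms(5) by blast
qed

lemma gj_sym_greedy_program:
  assumes kd: "0 < k" "0 < d"
  shows "length (gj_inputs (k * d) @ ys) = m \<Longrightarrow> sorted_wrt (<) S \<Longrightarrow> set S \<subseteq> {..<i} \<Longrightarrow> i \<le> k \<Longrightarrow>
    (\<forall>v\<in>gj_sym_vals (greedy_program k d i S m) (gj_inputs (k * d) @ ys). ratfun_deg v \<le> 4 * k) \<and>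
    gj_sym_preds (greedy_program k d i S m) (gj_inputs (k * d) @ ys) \<subseteq> greedy_tests k d"
proof (induction "k - i" arbitrary: i S m ys)
  case 0
  then have "i = k" "set S \<subseteq> {..<k}"
    by auto
  moreover from this have "length S \<le> k"
    using 0 length_le_of_strict_sorted by blast
  ultimately show ?case
    using gj_sym_proj_program[of S k d ys m] 0 kd by (fastforce simp: greedy_program_final)
next
  case (Suc n)
  let ?xs = "gj_inputs (k * d)"
  let ?T = "S @ [i]"
  let ?e = "singular_test_expr d ?T"
  let ?zs = "map (eval_expr (?xs @ ys)) (expr_ops ?e)"
  have i: "i < k"
    using Suc.hyps(2) by simp
  have T: "sorted_wrt (<) ?T" "set ?T \<subseteq> {..<Suc i}"
    using sorted_snoc_less[OF Suc.prems(2,3)] by auto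
  then have T_k: "set ?T \<subseteq> {..<k}"
    using i by auto
  then have vars: "expr_vars ?e \<subseteq> {..<length ?xs}"
    using expr_vars_singular_test_expr[of ?T k d] kd by simp
  then have vars': "expr_vars ?e \<subseteq> {..<length (?xs @ ys)}"
    by auto
  have m': "length (?xs @ (ys @ ?zs)) = m + length (expr_ops ?e)"
    using Suc.prems(1) by simp
  have "set S \<subseteq> {..<Suc i}"
    using Suc.prems(3) by auto
  then have IH_drop: "(\<forall>v\<in>gj_sym_vals (greedy_program k d (Suc i) S (m + length (expr_ops ?e))) (?xs @ (ys @ ?zs)).
        ratfun_deg v \<le> 4 * k) \<and>
      gj_sym_preds (greedy_program k d (Suc i) S (m + length (expr_ops ?e))) (?xs @ (ys @ ?zs)) \<subseteq> greedy_tests k d"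
    by (intro Suc.hyps(1)) (use Suc.hyps(2) Suc.prems m' i in simp_all)
  have IH_keep: "(\<forall>v\<in>gj_sym_vals (greedy_program k d (Suc i) ?T (m + length (expr_ops ?e))) (?xs @ (ys @ ?zs)).
        ratfun_deg v \<le> 4 * k) \<and>
      gj_sym_preds (greedy_program k d (Suc i) ?T (m + length (expr_ops ?e))) (?xs @ (ys @ ?zs)) \<subseteq> greedy_tests k d"
    by (intro Suc.hyps(1)) (use Suc.hyps(2) Suc.prems m' i T in simp_all)
  have ops: "ratfun_deg (eval_expr (?xs @ ys) e') \<le> 4 * k" if "e' \<in> set (expr_ops ?e)" for e'
    using ratfun_deg_singular_test_expr_ops[OF T(1) T_k _ kd(2) that] eval_expr_append[of e' ?xs ys]
      expr_vars_ops[OF that] vars by auto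
  have test: "eval_expr (?xs @ ys) ?e \<in> greedy_tests k d"
    using singular_test_expr_in_greedy_tests[OF T(1) T_k] eval_expr_append[OF vars] by simp
  have "gj_sym_vals (test_program ?e P Q m) (?xs @ ys)
      = eval_expr (?xs @ ys) ` set (expr_ops ?e) \<union> gj_sym_vals P (?xs @ (ys @ ?zs)) \<union> gj_sym_vals Q (?xs @ (ys @ ?zs))"
    "gj_sym_preds (test_program ?e P Q m) (?xs @ ys)
      = insert (eval_expr (?xs @ ys) ?e) (gj_sym_preds P (?xs @ (ys @ ?zs)) \<union> gj_sym_preds Q (?xs @ (ys @ ?zs)))"
    for P Q
    using gj_sym_test_program[OF vars', of P Q] Suc.prems(1) by simp_all
  then show ?case
    unfolding greedy_program_step[OF i] using IH_drop IH_keep ops test by auto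
qed

lemma greedy_program_computes_proj:
  assumes kd: "0 < k" "0 < d"
  shows "gj_computes_proj k d (\<lambda>Z. True) (greedy_program k d 0 [] (k * d))"
  unfolding gj_computes_proj_def
proof (intro conjI allI impI)
  show "gj_wf (greedy_program k d 0 [] (k * d)) (k * d)"
    using kd by (intro gj_wf_greedy_program) auto
next
  fix xs :: "real list" assume xs: "length xs = k * d"
  have "row_submat (mat_of_input k d xs) [] \<in> carrier_mat 0 d"
    using row_submat_carrier_mat[OF mat_of_input_carrier_mat, of k d xs "[]"] by simp
  then have "det (row_submat (mat_of_input k d xs) [] * transpose_mat (row_submat (mat_of_input k d xs) [])) = 1"
    by (intro det_dim_zero) simp
  then show "gj_exec (greedy_program k d 0 [] (k * d)) xs = Some (mat_entries (pinv (mat_of_input k d xs) * mat_of_input k d xs))"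
    using gj_exec_greedy_program[OF xs kd, of "[]" "k * d" "[]" 0] xs by simp
qed

lemma greedy_program_degree: "0 < k \<Longrightarrow> 0 < d \<Longrightarrow> gj_degree (k * d) (greedy_program k d 0 [] (k * d)) \<le> 4 * k"
  using gj_sym_greedy_program[of k d "[]" "k * d" "[]" 0] by (intro gj_degree_le) auto

lemma greedy_program_pred_complexity:
  assumes "0 < k" "0 < d"
  shows "gj_pred_complexity (k * d) (greedy_program k d 0 [] (k * d)) \<le> 2 ^ k"
proof -
  have "gj_sym_preds (greedy_program k d 0 [] (k * d)) (gj_inputs (k * d)) \<subseteq> greedy_tests k d"
    using gj_sym_greedy_program[OF assms, of "[]" "k * d" "[]" 0] by simp
  then show ?thesis
    unfolding gj_pred_complexity_def using card_mono[OF finite_greedy_tests] card_greedy_tests order_trans by blast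
qed

lemma full_rank_program_computes_proj:
  assumes kd: "0 < k" "0 < d"
  shows "gj_computes_proj k d (\<lambda>Z. vec_space.rank k Z = k) (proj_program d [0..<k] (k * d))"
  unfolding gj_computes_proj_def
proof (intro conjI allI impI)
  show "gj_wf (proj_program d [0..<k] (k * d)) (k * d)"
    using kd by (intro gj_wf_proj_program) auto
next
  fix xs :: "real list" assume xs: "length xs = k * d" and rank: "vec_space.rank k (mat_of_input k d xs) = k"
  let ?Z = "mat_of_input k d xs"
  have "det (row_submat ?Z [0..<k] * transpose_mat (row_submat ?Z [0..<k])) \<noteq> 0"
    using det_gram_nonzero_of_rank[OF mat_of_input_carrier_mat rank]
    by (simp add: row_submat_upt[OF mat_of_input_carrier_mat])
  moreover have "\<forall>r<k. in_row_span ?Z [0..<k] r"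
    using in_row_span_nth[of _ "[0..<k]" ?Z] by simp
  moreover have "set [0..<k] \<subseteq> {..<k}"
    by auto
  ultimately show "gj_exec (proj_program d [0..<k] (k * d)) xs = Some (mat_entries (pinv ?Z * ?Z))"
    using gj_exec_proj_program[OF xs kd, of "[0..<k]" "[]"] xs by simp
qed

lemma full_rank_program_degree:
  assumes "0 < k" "0 < d"
  shows "gj_degree (k * d) (proj_program d [0..<k] (k * d)) \<le> 2 * k"
proof -
  have "set [0..<k] \<subseteq> {..<k}"
    by auto
  then show ?thesis
    using gj_sym_proj_program(1)[of "[0..<k]" k d "[]" "k * d"] assms by (intro gj_degree_le) auto
qed

lemma full_rank_program_pred_complexity: "gj_pred_complexity (k * d) (proj_program d [0..<k] (k * d)) = 0"
  by (simp add: gj_pred_complexity_def proj_program_def gj_sym_preds_output_program)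

theorem lemma5p2:
  shows "(\<exists>C::nat. \<forall>k d. k \<ge> 1 \<longrightarrow> d \<ge> 1 \<longrightarrow>
            (\<exists>P. gj_computes_proj k d (\<lambda>Z. True) P \<and>
                 gj_degree (k * d) P \<le> C * k \<and>
                 gj_pred_complexity (k * d) P \<le> 2 ^ k))
       \<and> (\<exists>C::nat. \<forall>k d. k \<ge> 1 \<longrightarrow> d \<ge> 1 \<longrightarrow>
            (\<exists>P. gj_computes_proj k d (\<lambda>Z. vec_space.rank k Z = k) P \<and>
                 gj_degree (k * d) P \<le> C * k \<and>
                 gj_pred_complexity (k * d) P = 0))"
proof (intro conjI exI[of _ 4] allI impI)
  fix k d :: nat assume "k \<ge> 1" "d \<ge> 1"
  then have kd: "0 < k" "0 < d"
    by auto
  show "\<exists>P. gj_computes_proj k d (\<lambda>Z. True) P \<and> gj_degree (k * d) P \<le> 4 * k \<and>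
      gj_pred_complexity (k * d) P \<le> 2 ^ k"
    using greedy_program_computes_proj[OF kd] greedy_program_degree[OF kd] greedy_program_pred_complexity[OF kd]
    by blast
  show "\<exists>P. gj_computes_proj k d (\<lambda>Z. vec_space.rank k Z = k) P \<and> gj_degree (k * d) P \<le> 4 * k \<and>
      gj_pred_complexity (k * d) P = 0"
    using full_rank_program_computes_proj[OF kd] full_rank_program_degree[OF kd]
      full_rank_program_pred_complexity[of k d]
    by (intro exI[of _ "proj_program d [0..<k] (k * d)"]) auto
qed

end
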